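(* Let $k,d\in\mathbb{N}$ with $0<k<d$, let $\mathcal{H}\in\bar{\mathbb{Q}}\cap[1,\infty)$, let $K$ be the normal closure of $\mathbb{Q}(\mathcal{H}^d)$, and let $\alpha\in A(k,d,\mathcal{H})$. Then $[K(\alpha):K]$ divides $\gcd(k,d)$. Furthermore, if $\alpha_1,\dots,\alpha_d$ are the conjugates of $\alpha$, numbered so that $|\alpha_i|\ge1$ if and only if $1\le i\le d-k$, then every $\sigma\in\mathrm{Gal}(\bar{\mathbb{Q}}/\mathbb{Q})$ with $\sigma(\mathcal{H}^d)=\mathcal{H}^d$ satisfies $\sigma(\{\alpha_1,\dots,\alpha_{d-k}\})=\{\alpha_1,\dots,\alpha_{d-k}\}$.
   Context: $\bar{\mathbb{Q}}$ is the algebraic closure of $\mathbb{Q}$ in $\mathbb{C}$. For algebraic $\alpha$ of degree $d$, with $a_0>0$ the leading coefficient of a minimal polynomial of $\alpha$ in $\mathbb{Z}[t]$ and conjugates $\alpha_1,\dots,\alpha_d$, $H(\alpha)=\big(a_0\prod_i\max\{1,|\alpha_i|\}\big)^{1/d}$ (absolute multiplicative Weil height). $A(k,d,\mathcal{H})=\{\alpha\in\mathbb{C}: [\mathbb{Q}(\alpha):\mathbb{Q}]=d,\ H(\alpha)=\mathcal{H},$ precisely $k$ conjugates of $\alpha$ in the open unit disk$\}$. *)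

theory Defs
  imports "HOL-Computational_Algebra.Computational_Algebra" "HOL-Analysis.Analysis"
begin

definition is_min_int_poly :: "complex \<Rightarrow> int poly \<Rightarrow> bool" where
  "is_min_int_poly x p \<longleftrightarrow> irreducible p \<and> lead_coeff p > 0 \<and> poly (map_poly of_int p) x = 0"

definition min_int_poly :: "complex \<Rightarrow> int poly" where
  "min_int_poly x = (SOME p. is_min_int_poly x p)"

definition alg_degree :: "complex \<Rightarrow> nat" where
  "alg_degree x = degree (min_int_poly x)"

definition conjugates :: "complex \<Rightarrow> complex set" where
  "conjugates x = {z. poly (map_poly of_int (min_int_poly x)) z = 0}"

definition weil_height :: "complex \<Rightarrow> real" where
  "weil_height x = (real_of_int (lead_coeff (min_int_poly x)) *
      (\<Prod>z\<in>conjugates x. max 1 (cmod z))) powr (1 / real (alg_degree x))"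

definition A_set :: "nat \<Rightarrow> nat \<Rightarrow> real \<Rightarrow> complex set" where
  "A_set k d H = {\<alpha>. algebraic \<alpha> \<and> alg_degree \<alpha> = d \<and> weil_height \<alpha> = H \<and>
      card {z \<in> conjugates \<alpha>. cmod z < 1} = k}"

definition is_subfield :: "complex set \<Rightarrow> bool" where
  "is_subfield F \<longleftrightarrow> 0 \<in> F \<and> 1 \<in> F \<and> (\<forall>x\<in>F. \<forall>y\<in>F. x + y \<in> F \<and> x - y \<in> F \<and> x * y \<in> F)
     \<and> (\<forall>x\<in>F. x \<noteq> 0 \<longrightarrow> inverse x \<in> F)"

definition gen_field :: "complex set \<Rightarrow> complex set" where
  "gen_field S = \<Inter>{F. is_subfield F \<and> S \<subseteq> F}"

definition normal_closure :: "complex \<Rightarrow> complex set" where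
  "normal_closure x = gen_field (conjugates x)"

definition degree_over :: "complex set \<Rightarrow> complex \<Rightarrow> nat" where
  "degree_over K a = (LEAST n. \<exists>p :: complex poly. p \<noteq> 0 \<and> degree p = n \<and>
      (\<forall>i. coeff p i \<in> K) \<and> poly p a = 0)"

definition gal_Qbar :: "(complex \<Rightarrow> complex) \<Rightarrow> bool" where
  "gal_Qbar \<sigma> \<longleftrightarrow> bij_betw \<sigma> {x. algebraic x} {x. algebraic x} \<and>
     (\<forall>x y. algebraic x \<longrightarrow> algebraic y \<longrightarrow> \<sigma> (x + y) = \<sigma> x + \<sigma> y \<and> \<sigma> (x * y) = \<sigma> x * \<sigma> y)"

end

theory Submission
  imports Defs
begin

text \<open>Up to sign, H(\<alpha>)^d is the Mahler product a_0 \<Prod> z of the conjugates z of \<alpha> with |z| \<ge> 1;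
  it is real because the conjugates are closed under complex conjugation. A field homomorphism \<tau>
  that fixes H^d and is defined on the conjugates permutes them and fixes this product, hence the
  product of the absolute values of the large conjugates. Sending a large conjugate into the open
  unit disk would decrease that product, so \<tau> permutes the large conjugates, and therefore also
  the small ones. By Galois descent the polynomials \<Prod>(X - z) over the large and over the small
  conjugates then have coefficients in the normal closure K of Q(H^d). All conjugates of \<alpha> have
  the same degree m over K, so each of these polynomials is a product of minimal polynomials of
  degree m over K, and m divides both d - k and k.\<close>

lemma subfield_0: "is_subfield F \<Longrightarrow> 0 \<in> F"
  and subfield_1: "is_subfield F \<Longrightarrow> 1 \<in> F"
  and subfield_add: "is_subfield F \<Longrightarrow> x \<in> F \<Longrightarrow> y \<in> F \<Longrightarrow> x + y \<in> F"
  and subfield_diff: "is_subfield F \<Longrightarrow> x \<in> F \<Longrightarrow> y \<in> F \<Longrightarrow> x - y \<in> F"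
  and subfield_mult: "is_subfield F \<Longrightarrow> x \<in> F \<Longrightarrow> y \<in> F \<Longrightarrow> x * y \<in> F"
  by (auto simp: is_subfield_def)

lemma subfield_inverse: "is_subfield F \<Longrightarrow> x \<in> F \<Longrightarrow> inverse x \<in> F"
  by (cases "x = 0") (auto simp: is_subfield_def)

lemma subfield_uminus: "is_subfield F \<Longrightarrow> x \<in> F \<Longrightarrow> - x \<in> F"
  using subfield_diff[of F 0 x] subfield_0[of F] by simp

lemma subfield_divide: "is_subfield F \<Longrightarrow> x \<in> F \<Longrightarrow> y \<in> F \<Longrightarrow> x / y \<in> F"
  by (simp add: divide_inverse subfield_mult subfield_inverse)

lemma subfield_sum: "is_subfield F \<Longrightarrow> (\<And>i. i \<in> I \<Longrightarrow> f i \<in> F) \<Longrightarrow> sum f I \<in> F"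
  by (induction I rule: infinite_finite_induct) (auto simp: subfield_0 subfield_add)

lemma subfield_prod: "is_subfield F \<Longrightarrow> (\<And>i. i \<in> I \<Longrightarrow> f i \<in> F) \<Longrightarrow> prod f I \<in> F"
  by (induction I rule: infinite_finite_induct) (auto simp: subfield_1 subfield_mult)

lemma subfield_power: "is_subfield F \<Longrightarrow> x \<in> F \<Longrightarrow> x ^ n \<in> F"
  by (induction n) (auto simp: subfield_1 subfield_mult)

lemma subfield_of_nat: "is_subfield F \<Longrightarrow> of_nat n \<in> F"
  by (induction n) (auto simp: subfield_0 subfield_1 subfield_add)

lemma subfield_of_int: "is_subfield F \<Longrightarrow> of_int n \<in> F"
  by (induction n rule: int_induct[where k = 0]) (auto simp: subfield_add subfield_diff subfield_0 subfield_1)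

lemma is_subfield_Rats: "is_subfield (\<rat> :: complex set)"
  unfolding is_subfield_def by auto

lemma is_subfield_gen_field: "is_subfield (gen_field S)"
  unfolding gen_field_def is_subfield_def by auto

lemma gen_field_superset: "S \<subseteq> gen_field S"
  unfolding gen_field_def by auto

lemma gen_field_least: "is_subfield F \<Longrightarrow> S \<subseteq> F \<Longrightarrow> gen_field S \<subseteq> F"
  unfolding gen_field_def by auto

lemma gen_field_mono: "S \<subseteq> T \<Longrightarrow> gen_field S \<subseteq> gen_field T"
  by (meson gen_field_least is_subfield_gen_field gen_field_superset order_trans)

lemma gen_field_eq: "is_subfield F \<Longrightarrow> gen_field F = F"
  by (simp add: gen_field_least gen_field_superset subset_antisym)

definition poly_over :: "complex set \<Rightarrow> complex poly \<Rightarrow> bool" where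
  "poly_over F p \<longleftrightarrow> (\<forall>i. coeff p i \<in> F)"

lemma poly_over_0: "is_subfield F \<Longrightarrow> poly_over F 0"
  by (simp add: poly_over_def subfield_0)

lemma poly_over_const: "is_subfield F \<Longrightarrow> c \<in> F \<Longrightarrow> poly_over F [:c:]"
  by (simp add: poly_over_def coeff_pCons subfield_0 split: nat.split)

lemma poly_over_pCons: "is_subfield F \<Longrightarrow> c \<in> F \<Longrightarrow> poly_over F p \<Longrightarrow> poly_over F (pCons c p)"
  by (simp add: poly_over_def coeff_pCons split: nat.split)

lemma poly_over_linear: "is_subfield F \<Longrightarrow> z \<in> F \<Longrightarrow> poly_over F [:-z, 1:]"
  by (intro poly_over_pCons poly_over_const subfield_uminus subfield_1)

lemma poly_over_add: "is_subfield F \<Longrightarrow> poly_over F p \<Longrightarrow> poly_over F q \<Longrightarrow> poly_over F (p + q)"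
  by (simp add: poly_over_def subfield_add)

lemma poly_over_diff: "is_subfield F \<Longrightarrow> poly_over F p \<Longrightarrow> poly_over F q \<Longrightarrow> poly_over F (p - q)"
  by (simp add: poly_over_def subfield_diff)

lemma poly_over_uminus: "is_subfield F \<Longrightarrow> poly_over F p \<Longrightarrow> poly_over F (- p)"
  by (simp add: poly_over_def subfield_uminus)

lemma poly_over_smult: "is_subfield F \<Longrightarrow> c \<in> F \<Longrightarrow> poly_over F p \<Longrightarrow> poly_over F (smult c p)"
  by (simp add: poly_over_def subfield_mult)

lemma poly_over_monom: "is_subfield F \<Longrightarrow> c \<in> F \<Longrightarrow> poly_over F (monom c n)"
  by (simp add: poly_over_def coeff_monom subfield_0)

lemma poly_over_mult: "is_subfield F \<Longrightarrow> poly_over F p \<Longrightarrow> poly_over F q \<Longrightarrow> poly_over F (p * q)"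
  unfolding poly_over_def coeff_mult by (auto intro!: subfield_sum subfield_mult)

lemma poly_over_prod:
  "is_subfield F \<Longrightarrow> (\<And>i. i \<in> I \<Longrightarrow> poly_over F (f i)) \<Longrightarrow> poly_over F (prod f I)"
  by (induction I rule: infinite_finite_induct)
    (auto simp: poly_over_mult one_pCons poly_over_const subfield_1)

lemma poly_over_pderiv: "is_subfield F \<Longrightarrow> poly_over F p \<Longrightarrow> poly_over F (pderiv p)"
  unfolding poly_over_def coeff_pderiv by (metis of_nat_Suc subfield_mult subfield_of_nat)

lemma poly_over_poly: "is_subfield F \<Longrightarrow> poly_over F p \<Longrightarrow> x \<in> F \<Longrightarrow> poly p x \<in> F"
  unfolding poly_altdef poly_over_def by (auto intro!: subfield_sum subfield_mult subfield_power)

lemma poly_over_mono: "F \<subseteq> G \<Longrightarrow> poly_over F p \<Longrightarrow> poly_over G p"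
  by (auto simp: poly_over_def)

lemma poly_over_of_int: "is_subfield F \<Longrightarrow> poly_over F (map_poly of_int p)"
  by (simp add: poly_over_def coeff_map_poly subfield_of_int)

lemma poly_over_division_step:
  assumes F: "is_subfield F" and p: "poly_over F p" "p \<noteq> 0" and q: "poly_over F q" "q \<noteq> 0"
    and deg: "degree q \<le> degree p"
  obtains t where "poly_over F t" "p - t * q = 0 \<or> degree (p - t * q) < degree p"
proof -
  define t where "t = monom (lead_coeff p / lead_coeff q) (degree p - degree q)"
  have t: "poly_over F t"
    unfolding t_def using p q F by (intro poly_over_monom subfield_divide) (auto simp: poly_over_def)
  have deg_tq: "degree (t * q) = degree p"
    using p q deg by (simp add: t_def degree_mult_eq degree_monom_eq)
  have "lead_coeff (t * q) = lead_coeff p"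
    using p q by (simp add: t_def lead_coeff_mult degree_monom_eq)
  then have "coeff (p - t * q) (degree p) = 0"
    using deg_tq by simp
  moreover have "degree (p - t * q) \<le> degree p"
    using deg_tq by (metis degree_diff_le le_refl)
  ultimately have "p - t * q = 0 \<or> degree (p - t * q) < degree p"
    by (metis leading_coeff_0_iff le_neq_implies_less)
  with t show thesis
    by (rule that)
qed

lemma poly_over_division:
  assumes F: "is_subfield F" and p: "poly_over F p" and q: "poly_over F q" and q0: "q \<noteq> 0"
  obtains s r where "poly_over F s" "poly_over F r" "p = s * q + r" "r = 0 \<or> degree r < degree q"
proof -
  have "\<exists>s r. poly_over F s \<and> poly_over F r \<and> p = s * q + r \<and> (r = 0 \<or> degree r < degree q)"
    using p
  proof (induction "degree p" arbitrary: p rule: less_induct)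
    case (less p)
    show ?case
    proof (cases "p = 0 \<or> degree p < degree q")
      case True
      then show ?thesis
        using less.prems F by (intro exI[of _ 0] exI[of _ p]) (auto simp: poly_over_0)
    next
      case False
      then obtain t where t: "poly_over F t" "p - t * q = 0 \<or> degree (p - t * q) < degree p"
        using poly_over_division_step[OF F less.prems _ q q0] by auto
      have "poly_over F (p - t * q)"
        using poly_over_diff[OF F less.prems poly_over_mult[OF F t(1) q]] .
      have "\<exists>s r. poly_over F s \<and> poly_over F r \<and> p - t * q = s * q + r \<and> (r = 0 \<or> degree r < degree q)"
        using t(2)
      proof
        assume "p - t * q = 0"
        then show ?thesis
          using F by (intro exI[of _ 0]) (simp add: poly_over_0)
      next
        assume "degree (p - t * q) < degree p"
        then show ?thesis
          using less.hyps \<open>poly_over F (p - t * q)\<close> by blast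
      qed
      then obtain s r where sr: "poly_over F s" "poly_over F r" "p - t * q = s * q + r"
        "r = 0 \<or> degree r < degree q"
        by blast
      have "p = (s + t) * q + r"
        using sr(3) by (simp add: algebra_simps)
      then show ?thesis
        using sr t F by (intro exI[of _ "s + t"] exI[of _ r]) (auto intro: poly_over_add)
    qed
  qed
  then show thesis
    using that by blast
qed

definition hom_on :: "complex set \<Rightarrow> (complex \<Rightarrow> complex) \<Rightarrow> bool" where
  "hom_on E \<tau> \<longleftrightarrow> \<tau> 1 = 1 \<and> (\<forall>x\<in>E. \<forall>y\<in>E. \<tau> (x + y) = \<tau> x + \<tau> y \<and> \<tau> (x * y) = \<tau> x * \<tau> y)"

lemma hom_on_id: "hom_on E id"
  by (simp add: hom_on_def)

context
  fixes E :: "complex set" and \<tau> :: "complex \<Rightarrow> complex"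
  assumes E: "is_subfield E" and h: "hom_on E \<tau>"
begin

lemma hom_on_1: "\<tau> 1 = 1"
  and hom_on_add: "x \<in> E \<Longrightarrow> y \<in> E \<Longrightarrow> \<tau> (x + y) = \<tau> x + \<tau> y"
  and hom_on_mult: "x \<in> E \<Longrightarrow> y \<in> E \<Longrightarrow> \<tau> (x * y) = \<tau> x * \<tau> y"
  using h by (auto simp: hom_on_def)

lemma hom_on_0: "\<tau> 0 = 0"
  using hom_on_add[of 0 0] subfield_0[OF E] by simp

lemma hom_on_uminus: "x \<in> E \<Longrightarrow> \<tau> (- x) = - \<tau> x"
  using hom_on_add[of "- x" x] subfield_uminus[OF E] hom_on_0 by (simp add: eq_neg_iff_add_eq_0)

lemma hom_on_diff: "x \<in> E \<Longrightarrow> y \<in> E \<Longrightarrow> \<tau> (x - y) = \<tau> x - \<tau> y"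
  using hom_on_add[of x "- y"] hom_on_uminus[of y] subfield_uminus[OF E] by simp

lemma hom_on_inverse: "x \<in> E \<Longrightarrow> \<tau> (inverse x) = inverse (\<tau> x)"
proof (cases "x = 0")
  case False
  assume x: "x \<in> E"
  have "\<tau> x * \<tau> (inverse x) = 1"
    using hom_on_mult[OF x subfield_inverse[OF E x]] False hom_on_1 by simp
  then show ?thesis
    by (metis inverse_unique)
qed (simp add: hom_on_0)

lemma hom_on_eq_0_iff: "x \<in> E \<Longrightarrow> \<tau> x = 0 \<longleftrightarrow> x = 0"
  using hom_on_inverse[of x] hom_on_mult[of x "inverse x"] subfield_inverse[OF E] hom_on_1 hom_on_0
  by (cases "x = 0") auto

lemma inj_on_hom_on: "inj_on \<tau> E"
proof (rule inj_onI)
  fix x y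
  assume "x \<in> E" "y \<in> E" "\<tau> x = \<tau> y"
  then have "\<tau> (x - y) = 0"
    by (simp add: hom_on_diff)
  then show "x = y"
    using hom_on_eq_0_iff[of "x - y"] subfield_diff[OF E] \<open>x \<in> E\<close> \<open>y \<in> E\<close> by simp
qed

lemma hom_on_of_int: "\<tau> (of_int n) = of_int n"
  by (induction n rule: int_induct[where k = 0])
    (simp_all add: hom_on_0 hom_on_add hom_on_diff hom_on_1 subfield_of_int[OF E] subfield_1[OF E])

lemma hom_on_sum: "(\<And>i. i \<in> I \<Longrightarrow> f i \<in> E) \<Longrightarrow> \<tau> (sum f I) = (\<Sum>i\<in>I. \<tau> (f i))"
  by (induction I rule: infinite_finite_induct) (auto simp: hom_on_0 hom_on_add subfield_sum[OF E])

lemma hom_on_prod: "(\<And>i. i \<in> I \<Longrightarrow> f i \<in> E) \<Longrightarrow> \<tau> (prod f I) = (\<Prod>i\<in>I. \<tau> (f i))"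
  by (induction I rule: infinite_finite_induct) (auto simp: hom_on_1 hom_on_mult subfield_prod[OF E])

lemma hom_on_power: "x \<in> E \<Longrightarrow> \<tau> (x ^ n) = \<tau> x ^ n"
  by (induction n) (auto simp: hom_on_1 hom_on_mult subfield_power[OF E])

lemma coeff_map_poly_hom_on: "coeff (map_poly \<tau> p) i = \<tau> (coeff p i)"
  by (simp add: coeff_map_poly hom_on_0)

lemma degree_map_poly_hom_on: "poly_over E p \<Longrightarrow> degree (map_poly \<tau> p) = degree p"
  by (cases "p = 0") (auto intro!: map_poly_degree_eq simp: hom_on_eq_0_iff poly_over_def)

lemma hom_on_poly: "poly_over E q \<Longrightarrow> z \<in> E \<Longrightarrow> \<tau> (poly q z) = poly (map_poly \<tau> q) (\<tau> z)"
  using degree_map_poly_hom_on[of q] unfolding poly_altdef poly_over_def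
  by (subst hom_on_sum)
    (auto simp: hom_on_mult hom_on_power subfield_mult[OF E] subfield_power[OF E] coeff_map_poly_hom_on
      intro!: sum.cong)

lemma map_poly_hom_on_add:
  "poly_over E p \<Longrightarrow> poly_over E q \<Longrightarrow> map_poly \<tau> (p + q) = map_poly \<tau> p + map_poly \<tau> q"
  by (rule poly_eqI) (simp add: coeff_map_poly_hom_on poly_over_def hom_on_add)

lemma map_poly_hom_on_diff:
  "poly_over E p \<Longrightarrow> poly_over E q \<Longrightarrow> map_poly \<tau> (p - q) = map_poly \<tau> p - map_poly \<tau> q"
  by (rule poly_eqI) (simp add: coeff_map_poly_hom_on poly_over_def hom_on_diff)

lemma map_poly_hom_on_mult:
  "poly_over E p \<Longrightarrow> poly_over E q \<Longrightarrow> map_poly \<tau> (p * q) = map_poly \<tau> p * map_poly \<tau> q"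
  by (rule poly_eqI)
    (auto simp: coeff_map_poly_hom_on poly_over_def coeff_mult hom_on_sum hom_on_mult subfield_mult[OF E]
      intro!: sum.cong)

lemma map_poly_hom_on_const: "map_poly \<tau> [:c:] = [:\<tau> c:]"
  by (rule poly_eqI) (simp add: coeff_map_poly_hom_on coeff_pCons hom_on_0 split: nat.split)

lemma map_poly_hom_on_linear: "z \<in> E \<Longrightarrow> map_poly \<tau> [:-z, 1:] = [:- \<tau> z, 1:]"
  using hom_on_0 hom_on_1 hom_on_uminus by (simp add: map_poly_pCons)

lemma map_poly_hom_on_prod:
  "(\<And>i. i \<in> I \<Longrightarrow> poly_over E (f i)) \<Longrightarrow> map_poly \<tau> (prod f I) = (\<Prod>i\<in>I. map_poly \<tau> (f i))"
  by (induction I rule: infinite_finite_induct)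
    (simp_all add: map_poly_hom_on_mult poly_over_prod[OF E] hom_on_1)

end

section \<open>Minimal polynomials over a subfield\<close>

definition alg_over :: "complex set \<Rightarrow> complex \<Rightarrow> bool" where
  "alg_over F z \<longleftrightarrow> (\<exists>p. p \<noteq> 0 \<and> poly_over F p \<and> poly p z = 0)"

lemma algebraic_alg_over: "algebraic z \<Longrightarrow> is_subfield F \<Longrightarrow> alg_over F z"
proof -
  assume "algebraic z" "is_subfield F"
  then obtain p where p: "p \<noteq> 0" "poly (map_poly of_int p) z = 0"
    by (elim algebraicE')
  have "map_poly (of_int :: int \<Rightarrow> complex) p \<noteq> 0"
    using p(1) by (subst map_poly_eq_0_iff) auto
  then show ?thesis
    unfolding alg_over_def using p(2) poly_over_of_int[OF \<open>is_subfield F\<close>] by blast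
qed

lemma degree_over_le:
  "p \<noteq> 0 \<Longrightarrow> poly_over F p \<Longrightarrow> poly p z = 0 \<Longrightarrow> degree_over F z \<le> degree p"
  unfolding degree_over_def poly_over_def by (rule Least_le) auto

definition minpoly :: "complex set \<Rightarrow> complex \<Rightarrow> complex poly" where
  "minpoly F z = (SOME q. lead_coeff q = 1 \<and> poly_over F q \<and> poly q z = 0 \<and> degree q = degree_over F z)"

lemma minpoly_exists:
  assumes F: "is_subfield F" and a: "alg_over F z"
  shows "\<exists>q. lead_coeff q = 1 \<and> poly_over F q \<and> poly q z = 0 \<and> degree q = degree_over F z"
proof -
  have "\<exists>n p. p \<noteq> 0 \<and> degree p = n \<and> (\<forall>i. coeff p i \<in> F) \<and> poly p z = 0"
    using a unfolding alg_over_def poly_over_def by blast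
  then have "\<exists>p. p \<noteq> 0 \<and> degree p = degree_over F z \<and> (\<forall>i. coeff p i \<in> F) \<and> poly p z = 0"
    unfolding degree_over_def by (rule LeastI_ex)
  then obtain p where p: "p \<noteq> 0" "degree p = degree_over F z" "poly_over F p" "poly p z = 0"
    unfolding poly_over_def by blast
  define q where "q = smult (inverse (lead_coeff p)) p"
  have "lead_coeff p \<in> F"
    using p(3) by (simp add: poly_over_def)
  then have "poly_over F q"
    unfolding q_def using F p(3) by (intro poly_over_smult subfield_inverse)
  moreover have "lead_coeff p \<noteq> 0"
    using p(1) by simp
  then have "lead_coeff q = 1" "degree q = degree p" "poly q z = 0"
    using p(4) by (simp_all add: q_def)
  ultimately show ?thesis
    using p by (intro exI[of _ q]) auto
qed

context
  fixes F :: "complex set" and z :: complex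
  assumes F: "is_subfield F" and a: "alg_over F z"
begin

lemma minpoly_monic: "lead_coeff (minpoly F z) = 1"
  and minpoly_poly_over: "poly_over F (minpoly F z)"
  and minpoly_root: "poly (minpoly F z) z = 0"
  and degree_minpoly: "degree (minpoly F z) = degree_over F z"
  using someI_ex[OF minpoly_exists[OF F a]] unfolding minpoly_def by blast+

lemma minpoly_nonzero: "minpoly F z \<noteq> 0"
  using minpoly_monic by auto

lemma degree_over_pos: "degree_over F z \<ge> 1"
proof (rule ccontr)
  assume "\<not> ?thesis"
  then have "degree (minpoly F z) = 0"
    using degree_minpoly by simp
  then have "[:coeff (minpoly F z) 0:] = minpoly F z"
    by (rule degree_0_id)
  moreover have "coeff (minpoly F z) 0 = 1"
    using minpoly_monic \<open>degree (minpoly F z) = 0\<close> by simp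
  ultimately have "minpoly F z = [:1:]"
    by simp
  then have "poly (minpoly F z) z = 1"
    by simp
  then show False
    using minpoly_root by simp
qed

lemma minpoly_dvd:
  assumes p: "poly_over F p" "poly p z = 0"
  obtains s where "poly_over F s" "p = s * minpoly F z"
proof -
  obtain s r where sr: "poly_over F s" "poly_over F r" "p = s * minpoly F z + r"
    "r = 0 \<or> degree r < degree (minpoly F z)"
    using poly_over_division[OF F p(1) minpoly_poly_over minpoly_nonzero] by blast
  have "poly r z = 0"
    using sr(3) p(2) minpoly_root by (simp add: eq_neg_iff_add_eq_0)
  have "r = 0"
  proof (rule ccontr)
    assume "r \<noteq> 0"
    from degree_over_le[OF this sr(2) \<open>poly r z = 0\<close>] sr(4) \<open>r \<noteq> 0\<close> degree_minpoly
    show False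
      by simp
  qed
  then show thesis
    using sr that by simp
qed

lemma minpoly_unique:
  assumes q: "lead_coeff q = 1" "poly_over F q" "poly q z = 0" "degree q = degree_over F z"
  shows "q = minpoly F z"
proof -
  obtain s where s: "poly_over F s" "q = s * minpoly F z"
    using minpoly_dvd q(2,3) by blast
  have q0: "q \<noteq> 0"
    using q(1) by auto
  then have s0: "s \<noteq> 0"
    using s by auto
  have "degree q = degree s + degree (minpoly F z)"
    using s(2) s0 minpoly_nonzero by (simp add: degree_mult_eq)
  then have "degree s = 0"
    using q(4) degree_minpoly by simp
  moreover have "lead_coeff q = lead_coeff s * lead_coeff (minpoly F z)"
    using s(2) by (simp add: lead_coeff_mult)
  moreover note degree_0_id[OF \<open>degree s = 0\<close>]
  ultimately have "s = [:1:]"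
    using q(1) minpoly_monic by simp
  then have "s = 1"
    by (simp add: one_pCons)
  then show ?thesis
    using s by simp
qed

lemma poly_pderiv_minpoly_nonzero: "poly (pderiv (minpoly F z)) z \<noteq> 0"
proof
  assume r: "poly (pderiv (minpoly F z)) z = 0"
  have d: "degree (minpoly F z) \<ge> 1"
    using degree_over_pos degree_minpoly by simp
  then have "pderiv (minpoly F z) \<noteq> 0"
    by (simp add: pderiv_eq_0_iff)
  from degree_over_le[OF this poly_over_pderiv[OF F minpoly_poly_over] r]
  show False
    using d degree_minpoly by (simp add: degree_pderiv)
qed

end

lemma minpoly_eq_if_root:
  assumes F: "is_subfield F" and a: "alg_over F x" and y: "poly (minpoly F x) y = 0"
  shows "minpoly F y = minpoly F x"
proof -
  have ay: "alg_over F y"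
    unfolding alg_over_def
    using minpoly_nonzero[OF F a] minpoly_poly_over[OF F a] y by blast
  obtain s where s: "poly_over F s" "minpoly F x = s * minpoly F y"
    using minpoly_dvd[OF F ay minpoly_poly_over[OF F a] y] by blast
  have s0: "s \<noteq> 0"
    using s(2) minpoly_nonzero[OF F a] by auto
  have deq: "degree (minpoly F x) = degree s + degree (minpoly F y)"
    using s(2) s0 minpoly_nonzero[OF F ay] by (simp add: degree_mult_eq)
  have "poly s x = 0 \<or> poly (minpoly F y) x = 0"
    using minpoly_root[OF F a] s(2) by simp
  then show ?thesis
  proof
    assume "poly s x = 0"
    from degree_over_le[OF s0 s(1) this] show ?thesis
      using deq degree_minpoly[OF F a] degree_over_pos[OF F ay] degree_minpoly[OF F ay] by simp
  next
    assume r: "poly (minpoly F y) x = 0"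
    from degree_over_le[OF minpoly_nonzero[OF F ay] minpoly_poly_over[OF F ay] r]
    have "degree (minpoly F y) = degree_over F x"
      using deq degree_minpoly[OF F a] by simp
    from minpoly_unique[OF F a minpoly_monic[OF F ay] minpoly_poly_over[OF F ay] r this] show ?thesis .
  qed
qed

lemma rsquarefree_minpoly:
  assumes F: "is_subfield F" and a: "alg_over F x"
  shows "rsquarefree (minpoly F x)"
  unfolding rsquarefree_roots
proof (intro allI notI)
  fix y assume "poly (minpoly F x) y = 0 \<and> poly (pderiv (minpoly F x)) y = 0"
  then have y: "poly (minpoly F x) y = 0" "poly (pderiv (minpoly F x)) y = 0"
    by auto
  have ay: "alg_over F y"
    unfolding alg_over_def
    using minpoly_nonzero[OF F a] minpoly_poly_over[OF F a] y by blast
  show False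
    using poly_pderiv_minpoly_nonzero[OF F ay] minpoly_eq_if_root[OF F a y(1)] y(2) by simp
qed

section \<open>Simple algebraic extensions and extension of homomorphisms\<close>

definition adjoin :: "complex set \<Rightarrow> complex \<Rightarrow> complex set" where
  "adjoin E a = {poly q a | q. poly_over E q}"

context
  fixes E :: "complex set" and a :: complex
  assumes E: "is_subfield E" and alg: "alg_over E a"
begin

lemma adjoin_inverse_step:
  assumes q: "poly_over E q" "poly q a \<noteq> 0" "0 < degree q" "degree q < degree_over E a"
  obtains s r where "poly_over E s" "poly_over E r" "degree r < degree q" "poly r a \<noteq> 0"
    "poly r a = - (poly s a * poly q a)"
proof -
  let ?m = "minpoly E a"
  have q0: "q \<noteq> 0"
    using q(3) by auto
  obtain s r where sr: "poly_over E s" "poly_over E r" "?m = s * q + r" "r = 0 \<or> degree r < degree q"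
    using poly_over_division[OF E minpoly_poly_over[OF E alg] q(1) q0] by blast
  have rel: "poly r a = - (poly s a * poly q a)"
    using sr(3) minpoly_root[OF E alg] by (simp add: eq_neg_iff_add_eq_0 add.commute)
  have "r \<noteq> 0"
  proof
    assume "r = 0"
    then have ms: "?m = s * q"
      using sr(3) by simp
    then have "s \<noteq> 0"
      using minpoly_nonzero[OF E alg] by auto
    moreover have "poly s a = 0"
      using rel \<open>r = 0\<close> q(2) by simp
    ultimately have "degree_over E a \<le> degree s"
      using degree_over_le sr(1) by blast
    moreover have "degree ?m = degree s + degree q"
      using ms \<open>s \<noteq> 0\<close> q0 by (simp add: degree_mult_eq)
    ultimately show False
      using q(3) degree_minpoly[OF E alg] by simp
  qed
  then have "degree r < degree q"
    using sr(4) by simp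
  moreover have "poly r a \<noteq> 0"
    using degree_over_le[OF \<open>r \<noteq> 0\<close> sr(2), where z = a] calculation q(4) by auto
  ultimately show thesis
    using that sr(1,2) rel by blast
qed

lemma adjoin_inverse_low_degree:
  assumes "poly_over E q" "poly q a \<noteq> 0" "degree q < degree_over E a"
  shows "\<exists>q'. poly_over E q' \<and> poly q' a * poly q a = 1"
  using assms
proof (induction "degree q" arbitrary: q rule: less_induct)
  case (less q)
  show ?case
  proof (cases "degree q = 0")
    case True
    define c where "c = coeff q 0"
    have q: "q = [:c:]"
      unfolding c_def using True by (rule degree_0_id[symmetric])
    have "c \<in> E"
      using less.prems(1) by (simp add: poly_over_def c_def)
    moreover have "poly q a = c"
      by (subst q) simp
    ultimately show ?thesis
      using less.prems(2) E by (intro exI[of _ "[:inverse c:]"]) (auto intro: poly_over_const subfield_inverse)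
  next
    case False
    then obtain s r where sr: "poly_over E s" "poly_over E r" "degree r < degree q" "poly r a \<noteq> 0"
      "poly r a = - (poly s a * poly q a)"
      using adjoin_inverse_step[OF less.prems(1,2) _ less.prems(3)] by blast
    obtain r' where r': "poly_over E r'" "poly r' a * poly r a = 1"
      using less.hyps[OF sr(3) sr(2) sr(4)] sr(3) less.prems(3) by auto
    have "poly (- (s * r')) a * poly q a = 1"
      using r'(2) sr(5) by (simp add: algebra_simps)
    then show ?thesis
      using E sr(1) r'(1) by (intro exI[of _ "- (s * r')"]) (auto intro: poly_over_uminus poly_over_mult)
  qed
qed

lemma adjoin_inverse:
  assumes q: "poly_over E q" "poly q a \<noteq> 0"
  shows "\<exists>q'. poly_over E q' \<and> poly q' a * poly q a = 1"
proof -
  obtain s r where sr: "poly_over E s" "poly_over E r" "q = s * minpoly E a + r"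
    "r = 0 \<or> degree r < degree (minpoly E a)"
    using poly_over_division[OF E q(1) minpoly_poly_over minpoly_nonzero] E alg by blast
  have "poly r a = poly q a"
    using sr(3) minpoly_root[OF E alg] by simp
  moreover have "degree r < degree_over E a"
    using sr(4) q(2) \<open>poly r a = poly q a\<close> degree_minpoly[OF E alg] by auto
  ultimately show ?thesis
    using adjoin_inverse_low_degree[OF sr(2)] q(2) by simp
qed

lemma is_subfield_adjoin: "is_subfield (adjoin E a)"
  unfolding is_subfield_def adjoin_def
proof (intro conjI ballI impI)
  show "0 \<in> {poly q a |q. poly_over E q}"
    using poly_over_0[OF E] by (intro CollectI exI[of _ 0]) simp
  show "1 \<in> {poly q a |q. poly_over E q}"
    using poly_over_const[OF E subfield_1[OF E]] by (intro CollectI exI[of _ "[:1:]"]) simp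
next
  fix x y
  assume "x \<in> {poly q a |q. poly_over E q}" "y \<in> {poly q a |q. poly_over E q}"
  then obtain p q where pq: "poly_over E p" "poly_over E q" "x = poly p a" "y = poly q a"
    by blast
  show "x + y \<in> {poly q a |q. poly_over E q}"
    using pq poly_over_add[OF E pq(1,2)] by (intro CollectI exI[of _ "p + q"]) simp
  show "x - y \<in> {poly q a |q. poly_over E q}"
    using pq poly_over_diff[OF E pq(1,2)] by (intro CollectI exI[of _ "p - q"]) simp
  show "x * y \<in> {poly q a |q. poly_over E q}"
    using pq poly_over_mult[OF E pq(1,2)] by (intro CollectI exI[of _ "p * q"]) simp
next
  fix x
  assume "x \<in> {poly q a |q. poly_over E q}" "x \<noteq> 0"
  then obtain p where p: "poly_over E p" "x = poly p a"
    by blast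
  obtain q' where q': "poly_over E q'" "poly q' a * x = 1"
    using adjoin_inverse[OF p(1)] p(2) \<open>x \<noteq> 0\<close> by auto
  then have "inverse x = poly q' a"
    by (metis inverse_unique mult.commute)
  then show "inverse x \<in> {poly q a |q. poly_over E q}"
    using q'(1) by auto
qed

lemma adjoin_superset: "E \<subseteq> adjoin E a"
  unfolding adjoin_def by (auto intro!: exI[of _ "[:x:]" for x] poly_over_const[OF E])

lemma mem_adjoin: "a \<in> adjoin E a"
  unfolding adjoin_def using poly_over_linear[OF E subfield_0[OF E]]
  by (intro CollectI exI[of _ "[:-0, 1:]"]) simp

lemma gen_field_insert: "gen_field (insert a E) = adjoin E a"
proof (rule subset_antisym)
  show "gen_field (insert a E) \<subseteq> adjoin E a"
    using is_subfield_adjoin adjoin_superset mem_adjoin by (intro gen_field_least) auto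
  show "adjoin E a \<subseteq> gen_field (insert a E)"
    unfolding adjoin_def using is_subfield_gen_field gen_field_superset[of "insert a E"]
    by (auto intro!: poly_over_poly poly_over_mono[of E])
qed

lemma poly_map_poly_hom_on_eq:
  assumes h: "hom_on E \<tau>" and b: "poly (map_poly \<tau> (minpoly E a)) b = 0"
    and q: "poly_over E q1" "poly_over E q2" "poly q1 a = poly q2 a"
  shows "poly (map_poly \<tau> q1) b = poly (map_poly \<tau> q2) b"
proof -
  have "poly_over E (q1 - q2)" "poly (q1 - q2) a = 0"
    using q poly_over_diff[OF E] by auto
  then obtain s where "poly_over E s" "q1 - q2 = s * minpoly E a"
    by (rule minpoly_dvd[OF E alg])
  then have "map_poly \<tau> q1 - map_poly \<tau> q2 = map_poly \<tau> s * map_poly \<tau> (minpoly E a)"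
    using map_poly_hom_on_diff[OF E h q(1,2)] map_poly_hom_on_mult[OF E h _ minpoly_poly_over[OF E alg]]
    by simp
  then have "poly (map_poly \<tau> q1 - map_poly \<tau> q2) b = 0"
    using b by simp
  then show ?thesis
    by simp
qed

lemma hom_on_extend_adjoin:
  assumes h: "hom_on E \<tau>" and b: "poly (map_poly \<tau> (minpoly E a)) b = 0"
  obtains \<tau>' where "hom_on (adjoin E a) \<tau>'" "\<And>x. x \<in> E \<Longrightarrow> \<tau>' x = \<tau> x" "\<tau>' a = b"
proof -
  define \<tau>' where "\<tau>' x = poly (map_poly \<tau> (SOME q. poly_over E q \<and> poly q a = x)) b" for x
  have \<tau>': "\<tau>' (poly q a) = poly (map_poly \<tau> q) b" if q: "poly_over E q" for q
  proof -
    define q' where "q' = (SOME q'. poly_over E q' \<and> poly q' a = poly q a)"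
    have "poly_over E q'" "poly q' a = poly q a"
      unfolding q'_def using someI[of "\<lambda>q'. poly_over E q' \<and> poly q' a = poly q a"] q by auto
    then show ?thesis
      unfolding \<tau>'_def q'_def[symmetric] by (rule poly_map_poly_hom_on_eq[OF h b _ q])
  qed
  have "hom_on (adjoin E a) \<tau>'"
    unfolding hom_on_def adjoin_def
  proof (safe)
    show "\<tau>' 1 = 1"
      using \<tau>'[OF poly_over_const[OF E subfield_1[OF E]]]
      by (simp add: map_poly_hom_on_const[OF E h] hom_on_1[OF E h])
  next
    fix p q
    assume p: "poly_over E p" and q: "poly_over E q"
    show "\<tau>' (poly p a + poly q a) = \<tau>' (poly p a) + \<tau>' (poly q a)"
      using \<tau>'[OF poly_over_add[OF E p q]] \<tau>'[OF p] \<tau>'[OF q] map_poly_hom_on_add[OF E h p q] by simp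
    show "\<tau>' (poly p a * poly q a) = \<tau>' (poly p a) * \<tau>' (poly q a)"
      using \<tau>'[OF poly_over_mult[OF E p q]] \<tau>'[OF p] \<tau>'[OF q] map_poly_hom_on_mult[OF E h p q] by simp
  qed
  moreover have "\<tau>' x = \<tau> x" if "x \<in> E" for x
    using \<tau>'[OF poly_over_const[OF E that]] by (simp add: map_poly_hom_on_const[OF E h])
  moreover have "\<tau>' a = b"
    using \<tau>'[OF poly_over_linear[OF E subfield_0[OF E]]]
    by (simp add: map_poly_pCons hom_on_0[OF E h] hom_on_1[OF E h])
  ultimately show thesis
    using that by blast
qed

end

lemma map_minpoly_has_root:
  assumes E: "is_subfield E" and a: "alg_over E a" and h: "hom_on E \<tau>"
  obtains b where "poly (map_poly \<tau> (minpoly E a)) b = 0"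
proof -
  have "degree (map_poly \<tau> (minpoly E a)) \<noteq> 0"
    using degree_map_poly_hom_on[OF E h minpoly_poly_over[OF E a]] degree_minpoly[OF E a]
      degree_over_pos[OF E a] by simp
  then have "\<not> constant (poly (map_poly \<tau> (minpoly E a)))"
    by (simp add: constant_degree)
  then show thesis
    using that fundamental_theorem_of_algebra by blast
qed

lemma hom_on_extend_gen_field:
  assumes E: "is_subfield E" and a: "algebraic a" and h: "hom_on E \<tau>"
    and b: "poly (map_poly \<tau> (minpoly E a)) b = 0"
  obtains \<tau>' where "hom_on (gen_field (insert a E)) \<tau>'" "\<And>x. x \<in> E \<Longrightarrow> \<tau>' x = \<tau> x" "\<tau>' a = b"
proof -
  have a': "alg_over E a"
    by (rule algebraic_alg_over[OF a E])
  obtain \<tau>' where "hom_on (adjoin E a) \<tau>'" "\<And>x. x \<in> E \<Longrightarrow> \<tau>' x = \<tau> x" "\<tau>' a = b"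
    using hom_on_extend_adjoin[OF E a' h b] by blast
  then show thesis
    using gen_field_insert[OF E a'] by (intro that[of \<tau>']) auto
qed

lemma hom_on_extend_finite:
  assumes S: "finite S" "\<And>x. x \<in> S \<Longrightarrow> algebraic x" and E: "is_subfield E" and h: "hom_on E \<tau>"
  obtains \<tau>' where "hom_on (gen_field (E \<union> S)) \<tau>'" "\<And>x. x \<in> E \<Longrightarrow> \<tau>' x = \<tau> x"
proof -
  have "\<exists>\<tau>'. hom_on (gen_field (E \<union> S)) \<tau>' \<and> (\<forall>x\<in>E. \<tau>' x = \<tau> x)"
    using S
  proof (induction S rule: finite_induct)
    case empty
    show ?case
      using h gen_field_eq[OF E] by (intro exI[of _ \<tau>]) simp
  next
    case (insert a S)
    let ?G = "gen_field (E \<union> S)"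
    obtain \<tau>1 where \<tau>1: "hom_on ?G \<tau>1" "\<forall>x\<in>E. \<tau>1 x = \<tau> x"
      using insert by auto
    have a: "algebraic a"
      using insert.prems by simp
    obtain b where "poly (map_poly \<tau>1 (minpoly ?G a)) b = 0"
      using map_minpoly_has_root[OF is_subfield_gen_field algebraic_alg_over[OF a is_subfield_gen_field] \<tau>1(1)]
      by blast
    then obtain \<tau>2 where \<tau>2: "hom_on (gen_field (insert a ?G)) \<tau>2" "\<And>x. x \<in> ?G \<Longrightarrow> \<tau>2 x = \<tau>1 x"
      using hom_on_extend_gen_field[OF is_subfield_gen_field a \<tau>1(1)] by blast
    have "gen_field (insert a ?G) = gen_field (E \<union> insert a S)"
    proof (rule subset_antisym)
      show "gen_field (insert a ?G) \<subseteq> gen_field (E \<union> insert a S)"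
        using gen_field_superset[of "E \<union> insert a S"] gen_field_mono[of "E \<union> S" "E \<union> insert a S"]
        by (intro gen_field_least is_subfield_gen_field) auto
      show "gen_field (E \<union> insert a S) \<subseteq> gen_field (insert a ?G)"
        using gen_field_superset[of "insert a ?G"] gen_field_superset[of "E \<union> S"]
        by (intro gen_field_least is_subfield_gen_field) auto
    qed
    moreover have "\<forall>x\<in>E. \<tau>2 x = \<tau> x"
      using \<tau>1(2) \<tau>2(2) gen_field_superset[of "E \<union> S"] by auto
    ultimately show ?case
      using \<tau>2(1) by auto
  qed
  then show thesis
    using that by blast
qed

section \<open>The algebraic numbers form a field\<close>

interpretation rat_span: vector_space "\<lambda>r (z :: complex). of_rat r * z"
  by unfold_locales (simp_all add: algebra_simps of_rat_add of_rat_mult)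

lemma Rats_mult_in_rat_span: "c \<in> \<rat> \<Longrightarrow> v \<in> rat_span.span S \<Longrightarrow> c * v \<in> rat_span.span S"
  by (auto elim!: Rats_cases intro: rat_span.span_scale)

lemma mult_in_rat_span:
  assumes "a \<in> rat_span.span A" "b \<in> rat_span.span B"
  shows "a * b \<in> rat_span.span ((\<lambda>(u, v). u * v) ` (A \<times> B))"
proof -
  let ?T = "rat_span.span ((\<lambda>(u, v). u * v) ` (A \<times> B))"
  have closed: "rat_span.subspace {x. f x \<in> ?T}"
    if "\<And>x y. f (x + y) = f x + f y" "\<And>c x. f (of_rat c * x) = of_rat c * f x" for f
    using that unfolding rat_span.subspace_def
    by (auto intro: rat_span.span_add rat_span.span_scale rat_span.span_zero
        simp: that(2)[of 0 0, simplified])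
  have left: "u * b \<in> ?T" if "u \<in> A" for u
    using assms(2)
  proof (rule rat_span.span_induct)
    show "rat_span.subspace {b. u * b \<in> ?T}"
      by (rule closed) (simp_all add: distrib_left mult.left_commute)
    show "u * v \<in> ?T" if "v \<in> B" for v
      using that \<open>u \<in> A\<close> by (intro rat_span.span_base) auto
  qed
  show ?thesis
    using assms(1)
  proof (rule rat_span.span_induct)
    show "rat_span.subspace {a. a * b \<in> ?T}"
      by (rule closed) (simp_all add: distrib_right mult.assoc)
  qed (rule left)
qed

lemma algebraic_if_powers_eq:
  assumes "z ^ i = z ^ j" "i < j"
  shows "algebraic (z :: complex)"
proof (rule algebraicI')
  let ?p = "monom (1 :: complex) j - monom 1 i"
  show "coeff ?p n \<in> \<rat>" for n
    by simp
  have "coeff ?p j = 1"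
    using assms(2) by simp
  then show "?p \<noteq> 0"
    using coeff_0[of j] by (metis zero_neq_one)
  show "poly ?p z = 0"
    using assms(1) by (simp add: poly_monom)
qed

lemma algebraic_if_rat_combination_of_powers:
  assumes K: "finite K" and sum: "(\<Sum>k\<in>K. of_rat (c k) * z ^ k) = 0" and k: "k \<in> K" "c k \<noteq> 0"
  shows "algebraic (z :: complex)"
proof (rule algebraicI')
  define p where "p = (\<Sum>k\<in>K. monom (of_rat (c k) :: complex) k)"
  have coeff_p: "coeff p n = (if n \<in> K then of_rat (c n) else 0)" for n
    using K by (simp add: p_def coeff_sum)
  show "coeff p n \<in> \<rat>" for n
    by (simp add: coeff_p)
  show "p \<noteq> 0"
    using coeff_p[of k] k by auto
  show "poly p z = 0"
    using sum by (simp add: p_def poly_sum poly_monom)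
qed

lemma algebraic_if_powers_in_finite_span:
  assumes W: "finite W" and pow: "\<And>k. z ^ k \<in> rat_span.span W"
  shows "algebraic z"
proof (cases "inj_on (\<lambda>k. z ^ k) {..card W}")
  case False
  then obtain i j where "i \<noteq> j" "z ^ i = z ^ j"
    unfolding inj_on_def by blast
  then show ?thesis
    by (cases i j rule: linorder_cases) (auto intro: algebraic_if_powers_eq[of z i j] algebraic_if_powers_eq[of z j i])
next
  case True
  define P where "P = (\<lambda>k. z ^ k) ` {..card W}"
  have "rat_span.dependent P"
  proof (rule ccontr)
    assume "\<not> rat_span.dependent P"
    moreover have "P \<subseteq> rat_span.span W"
      using pow by (auto simp: P_def)
    ultimately have "card P \<le> card W"
      using rat_span.independent_span_bound[OF W] by blast
    moreover have "card P = Suc (card W)"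
      using True by (simp add: P_def card_image)
    ultimately show False
      by simp
  qed
  then obtain t u v where t: "t \<subseteq> P" "(\<Sum>v\<in>t. of_rat (u v) * v) = 0" and v: "v \<in> t" "u v \<noteq> 0"
    unfolding rat_span.dependent_explicit by blast
  define K where "K = {k \<in> {..card W}. z ^ k \<in> t}"
  have K: "finite K" "(\<lambda>k. z ^ k) ` K = t"
    using t(1) by (auto simp: K_def P_def)
  have inj: "inj_on (\<lambda>k. z ^ k) K"
    using True by (rule inj_on_subset) (auto simp: K_def)
  obtain k where "k \<in> K" "v = z ^ k"
    using v(1) K(2) by blast
  moreover have "(\<Sum>k\<in>K. of_rat (u (z ^ k)) * z ^ k) = 0"
    using t(2) unfolding K(2)[symmetric] sum.reindex[OF inj] by simp
  ultimately show ?thesis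
    using v(2) by (intro algebraic_if_rat_combination_of_powers[OF K(1)]) auto
qed

lemma algebraic_powers_in_finite_span:
  assumes "algebraic x"
  obtains n where "\<And>k. x ^ k \<in> rat_span.span ((\<lambda>i. x ^ i) ` {..<n})"
proof -
  obtain p where p: "\<And>i. coeff p i \<in> \<rat>" "p \<noteq> 0" "poly p x = 0"
    using assms unfolding algebraic_altdef by blast
  define n where "n = degree p"
  have lc: "lead_coeff p \<noteq> 0"
    using p(2) by simp
  have "0 = (\<Sum>i<n. coeff p i * x ^ i) + lead_coeff p * x ^ n"
    using p(3) by (simp add: poly_altdef n_def lessThan_Suc_atMost[symmetric])
  then have top: "lead_coeff p * x ^ n = - (\<Sum>i<n. coeff p i * x ^ i)"
    by (simp add: eq_neg_iff_add_eq_0 add.commute)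
  have "x ^ k \<in> rat_span.span ((\<lambda>i. x ^ i) ` {..<n})" for k
  proof (induction k rule: less_induct)
    case (less k)
    show ?case
    proof (cases "k < n")
      case True
      then show ?thesis
        by (intro rat_span.span_base) auto
    next
      case False
      have "x ^ k = x ^ (k - n) * (lead_coeff p * x ^ n) / lead_coeff p"
        using False lc by (simp add: power_add[symmetric])
      also have "\<dots> = (\<Sum>i<n. (- coeff p i / lead_coeff p) * x ^ (i + (k - n)))"
        unfolding top by (simp add: sum_distrib_left sum_divide_distrib power_add sum_negf algebra_simps)
      also have "\<dots> \<in> rat_span.span ((\<lambda>i. x ^ i) ` {..<n})"
        using False p(1) lc
        by (intro rat_span.span_sum Rats_mult_in_rat_span less) (auto intro!: Rats_divide)
      finally show ?thesis .
    qed
  qed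
  then show thesis
    using that by blast
qed

lemma algebraic_add_mult:
  assumes "algebraic x" "algebraic (y :: complex)"
  shows "algebraic (x + y)" "algebraic (x * y)"
proof -
  obtain n where x: "\<And>k. x ^ k \<in> rat_span.span ((\<lambda>i. x ^ i) ` {..<n})"
    using algebraic_powers_in_finite_span[OF assms(1)] by blast
  obtain m where y: "\<And>k. y ^ k \<in> rat_span.span ((\<lambda>i. y ^ i) ` {..<m})"
    using algebraic_powers_in_finite_span[OF assms(2)] by blast
  define W where "W = (\<lambda>(u, v). u * v) ` ((\<lambda>i. x ^ i) ` {..<n} \<times> (\<lambda>i. y ^ i) ` {..<m})"
  have W: "finite W"
    by (simp add: W_def)
  have xy: "x ^ i * y ^ j \<in> rat_span.span W" for i j
    unfolding W_def by (rule mult_in_rat_span[OF x y])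
  show "algebraic (x + y)"
  proof (rule algebraic_if_powers_in_finite_span[OF W])
    show "(x + y) ^ k \<in> rat_span.span W" for k
      unfolding binomial_ring
      by (intro rat_span.span_sum) (simp add: mult.assoc Rats_mult_in_rat_span xy)
  qed
  show "algebraic (x * y)"
    by (rule algebraic_if_powers_in_finite_span[OF W]) (simp add: power_mult_distrib xy)
qed

lemma is_subfield_algebraic: "is_subfield {x. algebraic x}"
proof -
  have "algebraic (x - y)" if "algebraic x" "algebraic y" for x y :: complex
    using algebraic_add_mult(1)[of x "- y"] that by simp
  then show ?thesis
    unfolding is_subfield_def using algebraic_add_mult by (auto intro: algebraic_inverse)
qed

section \<open>Integer minimal polynomials and conjugates\<close>

lemma map_poly_of_int_mult:
  "map_poly (of_int :: int \<Rightarrow> complex) (p * q) = map_poly of_int p * map_poly of_int q"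
  by (rule poly_eqI) (simp add: coeff_map_poly coeff_mult)

lemma map_poly_of_int_smult:
  "map_poly (of_int :: int \<Rightarrow> complex) (smult c p) = smult (of_int c) (map_poly of_int p)"
  by (rule map_poly_smult) simp_all

lemma map_poly_of_int_uminus: "map_poly (of_int :: int \<Rightarrow> complex) (- p) = - map_poly of_int p"
  by (rule poly_eqI) (simp add: coeff_map_poly)

lemma map_poly_of_int_eq_iff:
  "map_poly (of_int :: int \<Rightarrow> complex) p = map_poly of_int q \<longleftrightarrow> p = q"
  by (auto simp: poly_eq_iff coeff_map_poly)

lemma map_poly_of_int_eq_0_iff: "map_poly (of_int :: int \<Rightarrow> complex) p = 0 \<longleftrightarrow> p = 0"
  using map_poly_of_int_eq_iff[of p 0] by simp

lemma degree_map_poly_of_int [simp]: "degree (map_poly (of_int :: int \<Rightarrow> complex) p) = degree p"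
  by (rule degree_map_poly) simp

lemma is_unit_constant_factor:
  fixes a b :: "int poly"
  assumes "r = a * b" "Polynomial.content r = 1" "degree b = 0"
  shows "is_unit b"
proof -
  have b: "b = [:coeff b 0:]"
    using assms(3) by (metis degree_0_id)
  have "Polynomial.content a * Polynomial.content b = 1"
    using assms(1,2) by (simp add: content_mult)
  then have "Polynomial.content b dvd 1"
    by (metis dvd_triv_right)
  then have "coeff b 0 dvd 1"
    by (subst (asm) b) simp
  then show ?thesis
    by (subst b) (simp add: is_unit_const_poly_iff)
qed

text \<open>Contents are multiplicative, so a factorisation of the primitive part has a constant unit
  factor as soon as one factor has degree 0; minimality of the degree forces this.\<close>

lemma irreducible_primitive_part_if_least_degree:
  fixes q :: "int poly" and z :: complex
  assumes q: "q \<noteq> 0" "poly (map_poly of_int q) z = 0"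
    and q_min: "\<And>r. r \<noteq> 0 \<Longrightarrow> poly (map_poly of_int r) z = 0 \<Longrightarrow> degree q \<le> degree r"
  shows "irreducible (primitive_part q)" and "poly (map_poly of_int (primitive_part q)) z = 0"
proof -
  define r where "r = primitive_part q"
  have r0: "r \<noteq> 0" and degree_r: "degree r = degree q" and content_r: "Polynomial.content r = 1"
    using q by (simp_all add: r_def)
  have "map_poly of_int q = smult (of_int (Polynomial.content q)) (map_poly (of_int :: int \<Rightarrow> complex) r)"
    by (simp add: r_def flip: map_poly_of_int_smult)
  then show rz: "poly (map_poly of_int (primitive_part q)) z = 0"
    using q by (simp add: r_def)
  show "irreducible (primitive_part q)"
    unfolding r_def[symmetric]
  proof (rule irreducibleI)
    show "\<not> r dvd 1"
    proof
      assume "r dvd 1"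
      then obtain c where "r = [:c:]" "c dvd 1"
        by (auto simp: is_unit_poly_iff)
      then show False
        using rz r0 by (simp add: map_poly_pCons r_def)
    qed
  next
    fix a b
    assume ab: "r = a * b"
    then have "a \<noteq> 0" "b \<noteq> 0"
      using r0 by auto
    then have "degree q = degree a + degree b"
      using ab degree_r by (simp add: degree_mult_eq)
    moreover have "poly (map_poly of_int a) z = 0 \<or> poly (map_poly of_int b) z = 0"
      using rz ab by (simp add: map_poly_of_int_mult r_def)
    then have "degree q \<le> degree a \<or> degree q \<le> degree b"
      using q_min \<open>a \<noteq> 0\<close> \<open>b \<noteq> 0\<close> by blast
    ultimately have "degree b = 0 \<or> degree a = 0"
      by presburger
    then show "a dvd 1 \<or> b dvd 1"
    proof
      assume "degree b = 0"
      then show ?thesis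
        using is_unit_constant_factor[OF ab content_r] by simp
    next
      assume "degree a = 0"
      then show ?thesis
        using is_unit_constant_factor[of r b a] ab content_r by (simp add: mult.commute)
    qed
  qed (fact r0)
qed

lemma ex_is_min_int_poly:
  assumes "algebraic z"
  shows "\<exists>p. is_min_int_poly z p"
proof -
  obtain q0 where "q0 \<noteq> 0" "poly (map_poly of_int q0) z = 0"
    using assms by (elim algebraicE')
  then obtain q :: "int poly" where q: "q \<noteq> 0" "poly (map_poly of_int q) z = 0"
    and q_min: "\<And>r. r \<noteq> 0 \<Longrightarrow> poly (map_poly of_int r) z = 0 \<Longrightarrow> degree q \<le> degree r"
    using ex_has_least_nat[of "\<lambda>q::int poly. q \<noteq> 0 \<and> poly (map_poly of_int q) z = 0" q0 degree] by blast
  define r where "r = primitive_part q"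
  have irr: "irreducible r" and rz: "poly (map_poly of_int r) z = 0"
    unfolding r_def using irreducible_primitive_part_if_least_degree[OF q q_min] by auto
  show ?thesis
  proof (cases "lead_coeff r > 0")
    case True
    then show ?thesis
      using irr rz unfolding is_min_int_poly_def by blast
  next
    case False
    have "r \<noteq> 0"
      using q by (simp add: r_def)
    then have "lead_coeff r \<noteq> 0"
      by simp
    with False have "lead_coeff r < 0"
      by linarith
    then have "lead_coeff (- r) > 0"
      by simp
    moreover have "irreducible (- r)"
    proof -
      have "- r = [:-1:] * r"
        by simp
      moreover have "is_unit [:-1::int:]"
        by (simp add: is_unit_const_poly_iff)
      ultimately show ?thesis
        using irr irreducible_mult_unit_left[of "[:-1::int:]" r] by simp
    qed
    ultimately show ?thesis
      using rz unfolding is_min_int_poly_def by (auto simp: map_poly_of_int_uminus)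
  qed
qed

lemma is_min_int_poly_min_int_poly: "algebraic z \<Longrightarrow> is_min_int_poly z (min_int_poly z)"
  using someI_ex[OF ex_is_min_int_poly] unfolding min_int_poly_def .

lemma clear_denominators:
  assumes "poly_over \<rat> r"
  obtains c :: int and r' where "c \<noteq> 0" "smult (of_int c) r = map_poly of_int r'"
    "degree r' = degree r" "r' = 0 \<longleftrightarrow> r = 0"
proof -
  have "\<exists>b::int. b \<noteq> 0 \<and> of_int b * coeff r i \<in> \<int>" for i
  proof -
    have "coeff r i \<in> \<rat>"
      using assms by (simp add: poly_over_def)
    then obtain a b :: int where "b > 0" "coeff r i = of_int a / of_int b"
      by (elim Rats_cases')
    then show ?thesis
      by (intro exI[of _ b]) auto
  qed
  then obtain B where B: "\<And>i. B i \<noteq> 0" "\<And>i. of_int (B i) * coeff r i \<in> \<int>"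
    by metis
  define c where "c = (\<Prod>i\<le>degree r. B i)"
  have "coeff (smult (of_int c) r) i \<in> \<int>" for i
  proof (cases "i \<le> degree r")
    case True
    then have "c = B i * (\<Prod>j\<in>{..degree r} - {i}. B j)"
      unfolding c_def by (subst prod.remove[of _ i]) auto
    then have "coeff (smult (of_int c) r) i =
        (of_int (B i) * coeff r i) * of_int (\<Prod>j\<in>{..degree r} - {i}. B j)"
      by (simp add: algebra_simps)
    also have "\<dots> \<in> \<int>"
      by (rule Ints_mult[OF B(2) Ints_of_int])
    finally show ?thesis .
  qed (simp add: coeff_eq_0)
  then obtain r' where r': "smult (of_int c) r = map_poly of_int r'"
    by (elim intpolyE) auto
  moreover have "c \<noteq> 0"
    unfolding c_def using B(1) by simp
  moreover have "degree r' = degree r"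
    using arg_cong[OF r', of degree] \<open>c \<noteq> 0\<close> by simp
  moreover have "r' = 0 \<longleftrightarrow> r = 0"
    using \<open>c \<noteq> 0\<close> by (simp flip: map_poly_of_int_eq_0_iff add: r'[symmetric])
  ultimately show thesis
    using that by blast
qed

text \<open>Gauss' lemma: clear denominators in both factors and use that p is prime in Z[X].\<close>

lemma degree_rat_factor_of_irreducible_eq_0:
  fixes p :: "int poly"
  assumes irr: "irreducible p" and fac: "map_poly of_int p = s * m"
    and s: "poly_over \<rat> s" and m: "poly_over \<rat> m" "degree m > 0"
  shows "degree s = 0"
proof -
  have "map_poly (of_int :: int \<Rightarrow> complex) p \<noteq> 0"
    using irr by (auto simp: map_poly_of_int_eq_0_iff)
  then have s0: "s \<noteq> 0" and m0: "m \<noteq> 0"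
    using fac by auto
  have deg_p: "degree p = degree s + degree m"
    using fac s0 m0 degree_map_poly_of_int[of p] by (simp add: degree_mult_eq)
  obtain c1 m' where c1: "c1 \<noteq> 0" "smult (of_int c1) m = map_poly of_int m'"
    and m': "degree m' = degree m" "m' = 0 \<longleftrightarrow> m = 0"
    by (rule clear_denominators[OF m(1)])
  obtain c2 s' where c2: "c2 \<noteq> 0" "smult (of_int c2) s = map_poly of_int s'"
    and s': "degree s' = degree s" "s' = 0 \<longleftrightarrow> s = 0"
    by (rule clear_denominators[OF s])
  have "map_poly (of_int :: int \<Rightarrow> complex) (smult (c1 * c2) p) = map_poly of_int (m' * s')"
    unfolding map_poly_of_int_smult map_poly_of_int_mult c1(2)[symmetric] c2(2)[symmetric] fac
    by (simp add: mult.commute)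
  then have "smult (c1 * c2) p = m' * s'"
    by (simp only: map_poly_of_int_eq_iff)
  then have "p dvd m' * s'"
    by (metis dvd_smult dvd_refl)
  then have "p dvd m' \<or> p dvd s'"
    using irreducible_imp_prime_poly[OF irr] by (simp add: prime_elem_dvd_mult_iff)
  moreover have "\<not> p dvd s'"
  proof
    assume "p dvd s'"
    then have "degree p \<le> degree s"
      using dvd_imp_degree_le[of p s'] s' s0 by simp
    then show False
      using deg_p m(2) by simp
  qed
  ultimately have "degree p \<le> degree m"
    using dvd_imp_degree_le[of p m'] m' m0 by simp
  then show ?thesis
    using deg_p by simp
qed

lemma is_min_int_poly_smult_minpoly:
  assumes mp: "is_min_int_poly z p"
  obtains a where "a \<noteq> 0" "map_poly of_int p = smult a (minpoly \<rat> z)"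
proof -
  let ?P = "map_poly (of_int :: int \<Rightarrow> complex) p"
  let ?m = "minpoly \<rat> z"
  have irr: "irreducible p" and pz: "poly ?P z = 0"
    using mp by (auto simp: is_min_int_poly_def)
  have "?P \<noteq> 0"
    using irr by (auto simp: map_poly_of_int_eq_0_iff)
  then have al: "alg_over \<rat> z"
    unfolding alg_over_def using poly_over_of_int[OF is_subfield_Rats] pz by blast
  obtain s where s: "poly_over \<rat> s" "?P = s * ?m"
    using minpoly_dvd[OF is_subfield_Rats al poly_over_of_int[OF is_subfield_Rats] pz] by blast
  have "degree ?m > 0"
    using degree_minpoly[OF is_subfield_Rats al] degree_over_pos[OF is_subfield_Rats al] by simp
  then have "degree s = 0"
    using degree_rat_factor_of_irreducible_eq_0[OF irr s(2) s(1) minpoly_poly_over[OF is_subfield_Rats al]]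
    by blast
  define a where "a = coeff s 0"
  have s_const: "s = [:a:]"
    unfolding a_def using \<open>degree s = 0\<close> by (rule degree_0_id[symmetric])
  show thesis
  proof (rule that)
    show "a \<noteq> 0"
      using s(2) s_const \<open>?P \<noteq> 0\<close> by auto
    show "?P = smult a ?m"
      using s(2) s_const by simp
  qed
qed

context
  fixes \<alpha> :: complex
  assumes alg: "algebraic \<alpha>"
begin

lemma alg_over_Rats: "alg_over \<rat> \<alpha>"
  by (rule algebraic_alg_over[OF alg is_subfield_Rats])

lemma conjugates_eq_roots_minpoly: "conjugates \<alpha> = {z. poly (minpoly \<rat> \<alpha>) z = 0}"
  and degree_minpoly_Rats: "degree (minpoly \<rat> \<alpha>) = alg_degree \<alpha>"
proof -
  obtain a where a: "a \<noteq> 0" "map_poly of_int (min_int_poly \<alpha>) = smult a (minpoly \<rat> \<alpha>)"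
    by (rule is_min_int_poly_smult_minpoly[OF is_min_int_poly_min_int_poly[OF alg]])
  show "conjugates \<alpha> = {z. poly (minpoly \<rat> \<alpha>) z = 0}"
    unfolding conjugates_def a(2) using a(1) by simp
  show "degree (minpoly \<rat> \<alpha>) = alg_degree \<alpha>"
    using arg_cong[OF a(2), of degree] a(1) by (simp add: alg_degree_def)
qed

lemma finite_conjugates: "finite (conjugates \<alpha>)"
  unfolding conjugates_eq_roots_minpoly
  by (rule poly_roots_finite[OF minpoly_nonzero[OF is_subfield_Rats alg_over_Rats]])

lemma self_in_conjugates: "\<alpha> \<in> conjugates \<alpha>"
  unfolding conjugates_eq_roots_minpoly using minpoly_root[OF is_subfield_Rats alg_over_Rats] by simp

lemma algebraic_conjugate:
  assumes "z \<in> conjugates \<alpha>"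
  shows "algebraic z"
proof (rule algebraicI')
  show "coeff (minpoly \<rat> \<alpha>) i \<in> \<rat>" for i
    using minpoly_poly_over[OF is_subfield_Rats alg_over_Rats] by (simp add: poly_over_def)
  show "minpoly \<rat> \<alpha> \<noteq> 0"
    by (rule minpoly_nonzero[OF is_subfield_Rats alg_over_Rats])
  show "poly (minpoly \<rat> \<alpha>) z = 0"
    using assms by (simp add: conjugates_eq_roots_minpoly)
qed

lemma minpoly_conjugate:
  assumes "z \<in> conjugates \<alpha>"
  shows "minpoly \<rat> z = minpoly \<rat> \<alpha>"
  using assms unfolding conjugates_eq_roots_minpoly
  by (intro minpoly_eq_if_root[OF is_subfield_Rats alg_over_Rats]) simp

lemma card_conjugates: "card (conjugates \<alpha>) = alg_degree \<alpha>"
proof -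
  let ?m = "minpoly \<rat> \<alpha>"
  have "smult (lead_coeff ?m) (\<Prod>z | poly ?m z = 0. [:-z, 1:]) = ?m"
    by (rule complex_poly_decompose_rsquarefree[OF rsquarefree_minpoly[OF is_subfield_Rats alg_over_Rats]])
  then have "degree ?m = degree (\<Prod>z | poly ?m z = 0. [:-z, 1:])"
    using minpoly_monic[OF is_subfield_Rats alg_over_Rats] by simp
  also have "\<dots> = (\<Sum>z | poly ?m z = 0. degree [:-z, 1 :: complex:])"
    by (rule degree_prod_sum_eq) simp
  also have "\<dots> = card (conjugates \<alpha>)"
    by (simp add: conjugates_eq_roots_minpoly)
  finally show ?thesis
    using degree_minpoly_Rats by simp
qed

lemma cnj_in_conjugates:
  assumes "z \<in> conjugates \<alpha>"
  shows "cnj z \<in> conjugates \<alpha>"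
proof -
  let ?P = "map_poly of_int (min_int_poly \<alpha>)"
  have "cnj (poly ?P z) = poly ?P (cnj z)"
    by (rule poly_cnj_real) (simp add: coeff_map_poly)
  then show ?thesis
    using assms by (simp add: conjugates_def)
qed

lemma hom_on_conjugate:
  assumes L: "is_subfield L" and h: "hom_on L \<tau>" and z: "z \<in> L" "z \<in> conjugates \<alpha>"
  shows "\<tau> z \<in> conjugates \<alpha>"
proof -
  let ?P = "map_poly of_int (min_int_poly \<alpha>)"
  have "map_poly \<tau> ?P = ?P"
    by (rule poly_eqI) (simp add: coeff_map_poly_hom_on[OF L h] coeff_map_poly hom_on_of_int[OF L h])
  then show ?thesis
    using hom_on_poly[OF L h poly_over_of_int[OF L, of "min_int_poly \<alpha>"] z(1)] z(2) hom_on_0[OF L h]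
    by (simp add: conjugates_def)
qed

end

section \<open>Descent to the ground field\<close>

lemma lead_coeff_prod_linear: "lead_coeff (\<Prod>z\<in>S. [:-z, 1:]) = (1 :: complex)"
  by (simp add: lead_coeff_prod)

lemma degree_prod_linear: "degree (\<Prod>z\<in>S. [:-z, 1 :: complex:]) = card S"
  by (subst degree_prod_sum_eq) simp_all

lemma poly_prod_linear_eq_0_iff:
  fixes S :: "complex set"
  assumes "finite S"
  shows "poly (\<Prod>z\<in>S. [:-z, 1:]) y = 0 \<longleftrightarrow> y \<in> S"
  using assms by (simp add: poly_prod)

lemma mem_subfield_if_only_root:
  assumes K: "is_subfield K" and c: "alg_over K c"
    and only: "\<And>y. poly (minpoly K c) y = 0 \<Longrightarrow> y = c"
  shows "c \<in> K"
proof -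
  have "{y. poly (minpoly K c) y = 0} = {c}"
    using only minpoly_root[OF K c] by auto
  then have "minpoly K c = [:-c, 1:]"
    using complex_poly_decompose_rsquarefree[OF rsquarefree_minpoly[OF K c]] minpoly_monic[OF K c]
    by simp
  moreover have "coeff (minpoly K c) 0 \<in> K"
    using minpoly_poly_over[OF K c] by (simp add: poly_over_def)
  ultimately have "- c \<in> K"
    by simp
  then show ?thesis
    using subfield_uminus[OF K, of "- c"] by simp
qed

text \<open>The roots split into complete sets of K-conjugates, each of size m.\<close>

lemma degree_over_dvd_degree:
  assumes K: "is_subfield K" and f: "poly_over K f" "lead_coeff f = 1"
    and roots: "\<And>z. poly f z = 0 \<Longrightarrow> alg_over K z \<and> degree_over K z = m"
  shows "m dvd degree f"
  using f roots
proof (induction "degree f" arbitrary: f rule: less_induct)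
  case (less f)
  show ?case
  proof (cases "degree f = 0")
    case False
    then have "\<not> constant (poly f)"
      by (simp add: constant_degree)
    then obtain z where z: "poly f z = 0"
      using fundamental_theorem_of_algebra by blast
    have az: "alg_over K z" "degree_over K z = m"
      using less.prems(3)[OF z] by auto
    obtain s where s: "poly_over K s" "f = s * minpoly K z"
      using minpoly_dvd[OF K az(1) less.prems(1) z] by blast
    have s0: "s \<noteq> 0"
      using s(2) less.prems(2) by auto
    have deg_f: "degree f = degree s + m"
      using s(2) s0 minpoly_nonzero[OF K az(1)] degree_minpoly[OF K az(1)] az(2)
      by (simp add: degree_mult_eq)
    have "lead_coeff s = 1"
      using less.prems(2) s(2) minpoly_monic[OF K az(1)] by (simp add: lead_coeff_mult)
    moreover have "alg_over K y \<and> degree_over K y = m" if "poly s y = 0" for y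
      using less.prems(3)[of y] s(2) that by simp
    moreover have "degree s < degree f"
      using deg_f degree_over_pos[OF K az(1)] az(2) by simp
    ultimately have "m dvd degree s"
      using less.hyps s(1) by blast
    then show ?thesis
      using deg_f by simp
  qed simp
qed

lemma is_subfield_hom_on_preimage:
  assumes L: "is_subfield L" and h: "hom_on L \<tau>" and K: "is_subfield K"
  shows "is_subfield {x \<in> L. \<tau> x \<in> K}"
  unfolding is_subfield_def
proof (intro conjI ballI impI)
  show "0 \<in> {x \<in> L. \<tau> x \<in> K}"
    using subfield_0[OF L] subfield_0[OF K] hom_on_0[OF L h] by simp
  show "1 \<in> {x \<in> L. \<tau> x \<in> K}"
    using subfield_1[OF L] subfield_1[OF K] hom_on_1[OF L h] by simp
next
  fix x y assume xy: "x \<in> {x \<in> L. \<tau> x \<in> K}" "y \<in> {x \<in> L. \<tau> x \<in> K}"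
  then have xy': "x \<in> L" "y \<in> L" "\<tau> x \<in> K" "\<tau> y \<in> K"
    by auto
  show "x + y \<in> {x \<in> L. \<tau> x \<in> K}"
    using xy' subfield_add[OF L] subfield_add[OF K] hom_on_add[OF L h] by simp
  show "x - y \<in> {x \<in> L. \<tau> x \<in> K}"
    using xy' subfield_diff[OF L] subfield_diff[OF K] hom_on_diff[OF L h] by simp
  show "x * y \<in> {x \<in> L. \<tau> x \<in> K}"
    using xy' subfield_mult[OF L] subfield_mult[OF K] hom_on_mult[OF L h] by simp
next
  fix x assume x: "x \<in> {x \<in> L. \<tau> x \<in> K}"
  then show "inverse x \<in> {x \<in> L. \<tau> x \<in> K}"
    using subfield_inverse[OF L] subfield_inverse[OF K] hom_on_inverse[OF L h] by simp
qed

text \<open>The preimage of the normal closure is a subfield containing the conjugates of \<beta>.\<close>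

lemma hom_on_normal_closure:
  assumes \<beta>: "algebraic \<beta>" and L: "is_subfield L" and h: "hom_on L \<tau>"
    and NL: "normal_closure \<beta> \<subseteq> L" and x: "x \<in> normal_closure \<beta>"
  shows "\<tau> x \<in> normal_closure \<beta>"
proof -
  have conj_N: "conjugates \<beta> \<subseteq> normal_closure \<beta>"
    unfolding normal_closure_def by (rule gen_field_superset)
  have "conjugates \<beta> \<subseteq> {x \<in> L. \<tau> x \<in> normal_closure \<beta>}"
    using hom_on_conjugate[OF \<beta> L h] conj_N NL by auto
  then have "normal_closure \<beta> \<subseteq> {x \<in> L. \<tau> x \<in> normal_closure \<beta>}"
    unfolding normal_closure_def
    by (intro gen_field_least is_subfield_hom_on_preimage[OF L h is_subfield_gen_field])
  then show ?thesis
    using x by blast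
qed

lemma degree_over_normal_closure_conjugate_le:
  assumes \<beta>: "algebraic \<beta>" and \<alpha>: "algebraic \<alpha>"
    and z1: "z1 \<in> conjugates \<alpha>" and z2: "z2 \<in> conjugates \<alpha>"
  shows "degree_over (normal_closure \<beta>) z2 \<le> degree_over (normal_closure \<beta>) z1"
proof -
  let ?N = "normal_closure \<beta>"
  have N: "is_subfield ?N"
    unfolding normal_closure_def by (rule is_subfield_gen_field)
  have a1: "algebraic z1" and al1: "alg_over ?N z1"
    using algebraic_conjugate[OF \<alpha> z1] algebraic_alg_over[OF _ N] by auto
  have "poly (map_poly id (minpoly \<rat> z1)) z2 = 0"
    using minpoly_conjugate[OF \<alpha> z1] z2 conjugates_eq_roots_minpoly[OF \<alpha>] by simp
  then obtain \<tau>1 where \<tau>1: "hom_on (gen_field (insert z1 \<rat>)) \<tau>1" "\<tau>1 z1 = z2"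
    using hom_on_extend_gen_field[OF is_subfield_Rats a1 hom_on_id] by blast
  let ?E = "gen_field (insert z1 \<rat>)"
  let ?L = "gen_field (?E \<union> conjugates \<beta>)"
  obtain \<tau> where \<tau>: "hom_on ?L \<tau>" "\<And>x. x \<in> ?E \<Longrightarrow> \<tau> x = \<tau>1 x"
    using hom_on_extend_finite[OF finite_conjugates[OF \<beta>] algebraic_conjugate[OF \<beta>]
        is_subfield_gen_field \<tau>1(1)] by blast
  have L: "is_subfield ?L"
    by (rule is_subfield_gen_field)
  have NL: "?N \<subseteq> ?L"
    unfolding normal_closure_def by (rule gen_field_mono) auto
  have z1L: "z1 \<in> ?L"
    using gen_field_superset[of "?E \<union> conjugates \<beta>"] gen_field_superset[of "insert z1 \<rat>"] by auto
  have "\<tau> z1 = z2"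
    using \<tau>(2) \<tau>1(2) gen_field_superset[of "insert z1 \<rat>"] by auto
  define q where "q = map_poly \<tau> (minpoly ?N z1)"
  have mL: "poly_over ?L (minpoly ?N z1)"
    using poly_over_mono[OF NL minpoly_poly_over[OF N al1]] .
  have "poly_over ?N q"
    using minpoly_poly_over[OF N al1] NL hom_on_normal_closure[OF \<beta> L \<tau>(1) NL]
    by (auto simp: q_def poly_over_def coeff_map_poly_hom_on[OF L \<tau>(1)])
  moreover have deg_q: "degree q = degree_over ?N z1"
    unfolding q_def using degree_map_poly_hom_on[OF L \<tau>(1) mL] degree_minpoly[OF N al1] by simp
  moreover have "q \<noteq> 0"
    using deg_q degree_over_pos[OF N al1] by auto
  moreover have "poly q z2 = 0"
    using hom_on_poly[OF L \<tau>(1) mL z1L] minpoly_root[OF N al1] hom_on_0[OF L \<tau>(1)] \<open>\<tau> z1 = z2\<close>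
    by (simp add: q_def)
  ultimately show ?thesis
    using degree_over_le[of q ?N z2] by simp
qed

lemma degree_over_normal_closure_conjugate:
  assumes "algebraic \<beta>" "algebraic \<alpha>" "z \<in> conjugates \<alpha>"
  shows "degree_over (normal_closure \<beta>) z = degree_over (normal_closure \<beta>) \<alpha>"
  using degree_over_normal_closure_conjugate_le[OF assms(1,2)] self_in_conjugates[OF assms(2)] assms(3)
  by (meson antisym)

lemma map_poly_hom_on_prod_linear:
  assumes L: "is_subfield L" and h: "hom_on L \<tau>" and S: "S \<subseteq> L" and perm: "\<tau> ` S = S"
  shows "map_poly \<tau> (\<Prod>z\<in>S. [:-z, 1:]) = (\<Prod>z\<in>S. [:-z, 1:])"
proof -
  have "map_poly \<tau> (\<Prod>z\<in>S. [:-z, 1:]) = (\<Prod>z\<in>S. map_poly \<tau> [:-z, 1:])"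
    using S by (intro map_poly_hom_on_prod[OF L h] poly_over_linear[OF L]) auto
  also have "\<dots> = (\<Prod>z\<in>S. [:- \<tau> z, 1:])"
    using S by (intro prod.cong refl map_poly_hom_on_linear[OF L h]) auto
  also have "\<dots> = (\<Prod>z\<in>\<tau> ` S. [:- z, 1:])"
    using inj_on_subset[OF inj_on_hom_on[OF L h] S] by (simp add: prod.reindex)
  finally show ?thesis
    using perm by simp
qed

text \<open>Each K-conjugate y of a coefficient c is the image of c under a homomorphism fixing K; such a
  homomorphism permutes S and thus fixes c, so y = c and c lies in K.\<close>

lemma poly_over_prod_linear_if_stable:
  assumes K: "is_subfield K" and T: "finite T" "\<And>z. z \<in> T \<Longrightarrow> algebraic z" and ST: "S \<subseteq> T"
    and stable: "\<And>L \<tau>. is_subfield L \<Longrightarrow> hom_on L \<tau> \<Longrightarrow> K \<union> T \<subseteq> L \<Longrightarrow>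
      (\<And>x. x \<in> K \<Longrightarrow> \<tau> x = x) \<Longrightarrow> \<tau> ` S = S"
  shows "poly_over K (\<Prod>z\<in>S. [:-z, 1:])"
  unfolding poly_over_def
proof
  fix i
  let ?f = "\<Prod>z\<in>S. [:-z, 1:]"
  define c where "c = coeff ?f i"
  have "poly_over {x. algebraic x} ?f"
    using ST T(2) by (intro poly_over_prod[OF is_subfield_algebraic] poly_over_linear[OF is_subfield_algebraic]) auto
  then have c: "algebraic c"
    by (simp add: poly_over_def c_def)
  have "c \<in> K"
  proof (rule mem_subfield_if_only_root[OF K algebraic_alg_over[OF c K]])
    fix y
    assume "poly (minpoly K c) y = 0"
    then have "poly (map_poly id (minpoly K c)) y = 0"
      by simp
    then obtain \<tau>1 where \<tau>1: "hom_on (gen_field (insert c K)) \<tau>1" "\<And>x. x \<in> K \<Longrightarrow> \<tau>1 x = id x" "\<tau>1 c = y"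
      using hom_on_extend_gen_field[OF K c hom_on_id] by blast
    let ?E = "gen_field (insert c K)"
    let ?L = "gen_field (?E \<union> T)"
    obtain \<tau> where \<tau>: "hom_on ?L \<tau>" "\<And>x. x \<in> ?E \<Longrightarrow> \<tau> x = \<tau>1 x"
      using hom_on_extend_finite[OF T is_subfield_gen_field \<tau>1(1)] by blast
    have L: "is_subfield ?L"
      by (rule is_subfield_gen_field)
    have E: "K \<subseteq> ?E" "c \<in> ?E" and EL: "?E \<union> T \<subseteq> ?L"
      using gen_field_superset[of "insert c K"] gen_field_superset[of "?E \<union> T"] by auto
    have "\<tau> ` S = S"
      using E EL \<tau>(2) \<tau>1(2) by (intro stable[OF L \<tau>(1)]) auto
    have "map_poly \<tau> ?f = ?f"
      using ST EL \<open>\<tau> ` S = S\<close> by (intro map_poly_hom_on_prod_linear[OF L \<tau>(1)]) auto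
    then have "coeff (map_poly \<tau> ?f) i = coeff ?f i"
      by simp
    then have "\<tau> c = c"
      unfolding c_def coeff_map_poly_hom_on[OF L \<tau>(1)] .
    then show "y = c"
      using \<tau>(2)[OF E(2)] \<tau>1(3) by simp
  qed
  then show "coeff ?f i \<in> K"
    by (simp add: c_def)
qed

section \<open>Conjugates outside the unit disk\<close>

definition large_conjugates :: "complex \<Rightarrow> complex set" where
  "large_conjugates \<alpha> = {z \<in> conjugates \<alpha>. 1 \<le> cmod z}"

definition small_conjugates :: "complex \<Rightarrow> complex set" where
  "small_conjugates \<alpha> = {z \<in> conjugates \<alpha>. cmod z < 1}"

text \<open>Its absolute value is the Mahler measure of \<alpha>, which equals H(\<alpha>)^d.\<close>

definition mahler_product :: "complex \<Rightarrow> complex" where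
  "mahler_product \<alpha> = of_int (lead_coeff (min_int_poly \<alpha>)) * (\<Prod>z\<in>large_conjugates \<alpha>. z)"

text \<open>An element moved into the open unit disk would make the product strictly smaller.\<close>

lemma image_eq_if_prod_norm_eq:
  fixes C :: "complex set"
  assumes C: "finite C" and inj: "inj_on \<tau> C" and into: "\<tau> ` C \<subseteq> C"
    and eq: "(\<Prod>z\<in>{z\<in>C. 1 \<le> cmod z}. cmod (\<tau> z)) = (\<Prod>z\<in>{z\<in>C. 1 \<le> cmod z}. cmod z)"
  shows "\<tau> ` {z\<in>C. 1 \<le> cmod z} = {z\<in>C. 1 \<le> cmod z}"
proof -
  define L where "L = {z\<in>C. 1 \<le> cmod z}"
  define T where "T = \<tau> ` L"
  have fin: "finite L" "finite T" and TC: "T \<subseteq> C"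
    using C into by (auto simp: L_def T_def)
  have inj_L: "inj_on \<tau> L"
    using inj by (rule inj_on_subset) (auto simp: L_def)
  have prod_T: "(\<Prod>z\<in>T. cmod z) = (\<Prod>z\<in>L. cmod z)"
    using eq inj_L by (simp add: T_def L_def prod.reindex)
  have "T \<subseteq> L"
  proof
    fix w
    assume w: "w \<in> T"
    show "w \<in> L"
    proof (rule ccontr)
      assume "w \<notin> L"
      then have "cmod w < 1"
        using w TC by (auto simp: L_def)
      then have "(\<Prod>z\<in>T. cmod z) < (\<Prod>z\<in>T. max 1 (cmod z))"
        using w fin(2) by (intro prod_mono_strict) auto
      also have "\<dots> \<le> (\<Prod>z\<in>C. max 1 (cmod z))"
        using C TC by (intro prod_mono2) auto
      also have "\<dots> = (\<Prod>z\<in>L. cmod z)"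
        using C by (intro prod.mono_neutral_cong_right) (auto simp: L_def)
      finally show False
        using prod_T by simp
    qed
  qed
  moreover have "card T = card L"
    using inj_L by (simp add: T_def card_image)
  ultimately have "T = L"
    using card_subset_eq[OF fin(1)] by blast
  then show ?thesis
    by (simp add: T_def L_def)
qed

context
  fixes \<alpha> :: complex
  assumes \<alpha>: "algebraic \<alpha>"
begin

lemma alg_degree_pos: "alg_degree \<alpha> \<ge> 1"
  using degree_minpoly_Rats[OF \<alpha>] degree_minpoly[OF is_subfield_Rats alg_over_Rats[OF \<alpha>]]
    degree_over_pos[OF is_subfield_Rats alg_over_Rats[OF \<alpha>]] by simp

lemma weil_height_power: "weil_height \<alpha> ^ alg_degree \<alpha> = cmod (mahler_product \<alpha>)"
proof -
  define X where
    "X = real_of_int (lead_coeff (min_int_poly \<alpha>)) * (\<Prod>z\<in>conjugates \<alpha>. max 1 (cmod z))"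
  have lc: "lead_coeff (min_int_poly \<alpha>) \<ge> 1"
    using is_min_int_poly_min_int_poly[OF \<alpha>] by (simp add: is_min_int_poly_def)
  have prod_ge: "(\<Prod>z\<in>conjugates \<alpha>. max 1 (cmod z)) \<ge> 1"
    by (rule prod_ge_1) simp
  have "(\<Prod>z\<in>conjugates \<alpha>. max 1 (cmod z)) = (\<Prod>z\<in>large_conjugates \<alpha>. cmod z)"
    using finite_conjugates[OF \<alpha>]
    by (intro prod.mono_neutral_cong_right) (auto simp: large_conjugates_def)
  then have X: "X = cmod (mahler_product \<alpha>)"
    using lc by (simp add: X_def mahler_product_def norm_mult prod_norm)
  have "1 * 1 \<le> X"
    unfolding X_def using lc prod_ge by (intro mult_mono) auto
  have "weil_height \<alpha> = X powr (1 / real (alg_degree \<alpha>))"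
    by (simp add: weil_height_def X_def)
  then have "weil_height \<alpha> ^ alg_degree \<alpha> = (X powr (1 / real (alg_degree \<alpha>))) powr (real (alg_degree \<alpha>))"
    using \<open>1 * 1 \<le> X\<close> by (subst powr_realpow) auto
  also have "\<dots> = X"
    using alg_degree_pos \<open>1 * 1 \<le> X\<close> by (simp add: powr_powr)
  finally show ?thesis
    using X by simp
qed

lemma cnj_mahler_product: "cnj (mahler_product \<alpha>) = mahler_product \<alpha>"
proof -
  have "cnj ` large_conjugates \<alpha> = large_conjugates \<alpha>"
    by (rule endo_inj_surj)
      (auto simp: large_conjugates_def finite_conjugates[OF \<alpha>] cnj_in_conjugates[OF \<alpha>] inj_on_def)
  have "cnj (mahler_product \<alpha>) = of_int (lead_coeff (min_int_poly \<alpha>)) * (\<Prod>z\<in>large_conjugates \<alpha>. cnj z)"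
    by (simp add: mahler_product_def)
  also have "(\<Prod>z\<in>large_conjugates \<alpha>. cnj z) = (\<Prod>z\<in>cnj ` large_conjugates \<alpha>. z)"
    by (subst prod.reindex) (auto simp: inj_on_def)
  finally show ?thesis
    using \<open>cnj ` large_conjugates \<alpha> = large_conjugates \<alpha>\<close> by (simp add: mahler_product_def)
qed

lemma of_real_weil_height_power:
  "complex_of_real (weil_height \<alpha> ^ alg_degree \<alpha>) = mahler_product \<alpha> \<or>
   complex_of_real (weil_height \<alpha> ^ alg_degree \<alpha>) = - mahler_product \<alpha>"
proof -
  have "mahler_product \<alpha> \<in> \<real>"
    using cnj_mahler_product by (simp add: Reals_cnj_iff)
  then obtain r where "mahler_product \<alpha> = complex_of_real r"
    by (auto elim: Reals_cases)
  then show ?thesis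
    using weil_height_power by (cases "r \<ge> 0") auto
qed

lemma algebraic_weil_height_power: "algebraic (complex_of_real (weil_height \<alpha> ^ alg_degree \<alpha>))"
proof -
  have "mahler_product \<alpha> \<in> {x. algebraic x}"
    unfolding mahler_product_def using algebraic_conjugate[OF \<alpha>]
    by (intro subfield_mult[OF is_subfield_algebraic] subfield_of_int[OF is_subfield_algebraic]
        subfield_prod[OF is_subfield_algebraic]) (auto simp: large_conjugates_def)
  then show ?thesis
    using of_real_weil_height_power by auto
qed

context
  fixes L \<tau>
  assumes L: "is_subfield L" and h: "hom_on L \<tau>" and conj_L: "conjugates \<alpha> \<subseteq> L"
begin

lemma hom_on_conjugates_eq: "\<tau> ` conjugates \<alpha> = conjugates \<alpha>"
  using hom_on_conjugate[OF \<alpha> L h] conj_L inj_on_subset[OF inj_on_hom_on[OF L h] conj_L]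
  by (intro endo_inj_surj finite_conjugates[OF \<alpha>]) auto

lemma hom_on_large_conjugates:
  assumes fixed: "\<tau> (complex_of_real (weil_height \<alpha> ^ alg_degree \<alpha>)) =
      complex_of_real (weil_height \<alpha> ^ alg_degree \<alpha>)"
  shows "\<tau> ` large_conjugates \<alpha> = large_conjugates \<alpha>"
proof -
  let ?P = "mahler_product \<alpha>"
  let ?a = "lead_coeff (min_int_poly \<alpha>)"
  have large_L: "large_conjugates \<alpha> \<subseteq> L"
    using conj_L by (auto simp: large_conjugates_def)
  have prod_L: "(\<Prod>z\<in>large_conjugates \<alpha>. z) \<in> L"
    using large_L by (intro subfield_prod[OF L]) auto
  have P_L: "?P \<in> L"
    unfolding mahler_product_def by (rule subfield_mult[OF L subfield_of_int[OF L] prod_L])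
  have "\<tau> ?P = ?P"
    using of_real_weil_height_power fixed hom_on_uminus[OF L h P_L] by auto
  moreover have "\<tau> ?P = of_int ?a * (\<Prod>z\<in>large_conjugates \<alpha>. \<tau> z)"
    unfolding mahler_product_def hom_on_mult[OF L h subfield_of_int[OF L] prod_L] hom_on_of_int[OF L h]
    using hom_on_prod[OF L h, of "large_conjugates \<alpha>" "\<lambda>z. z"] large_L by auto
  moreover have "?a > 0"
    using is_min_int_poly_min_int_poly[OF \<alpha>] by (simp add: is_min_int_poly_def)
  then have "min_int_poly \<alpha> \<noteq> 0"
    by auto
  ultimately have "(\<Prod>z\<in>large_conjugates \<alpha>. \<tau> z) = (\<Prod>z\<in>large_conjugates \<alpha>. z)"
    by (simp add: mahler_product_def)
  then have "(\<Prod>z\<in>large_conjugates \<alpha>. cmod (\<tau> z)) = (\<Prod>z\<in>large_conjugates \<alpha>. cmod z)"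
    by (simp add: prod_norm)
  then show ?thesis
    unfolding large_conjugates_def
    using finite_conjugates[OF \<alpha>] inj_on_subset[OF inj_on_hom_on[OF L h] conj_L] hom_on_conjugates_eq
    by (intro image_eq_if_prod_norm_eq) auto
qed

lemma hom_on_small_conjugates:
  assumes fixed: "\<tau> (complex_of_real (weil_height \<alpha> ^ alg_degree \<alpha>)) =
      complex_of_real (weil_height \<alpha> ^ alg_degree \<alpha>)"
  shows "\<tau> ` small_conjugates \<alpha> = small_conjugates \<alpha>"
proof -
  have "small_conjugates \<alpha> = conjugates \<alpha> - large_conjugates \<alpha>"
    by (auto simp: small_conjugates_def large_conjugates_def)
  moreover have "\<tau> ` (conjugates \<alpha> - large_conjugates \<alpha>) = \<tau> ` conjugates \<alpha> - \<tau> ` large_conjugates \<alpha>"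
    using inj_on_subset[OF inj_on_hom_on[OF L h] conj_L]
    by (rule inj_on_image_set_diff) (auto simp: large_conjugates_def)
  ultimately show ?thesis
    using hom_on_conjugates_eq hom_on_large_conjugates[OF fixed] by simp
qed

end

lemma card_large_small_conjugates:
  "card (large_conjugates \<alpha>) + card (small_conjugates \<alpha>) = alg_degree \<alpha>"
proof -
  have "conjugates \<alpha> = large_conjugates \<alpha> \<union> small_conjugates \<alpha>"
    "large_conjugates \<alpha> \<inter> small_conjugates \<alpha> = {}"
    by (auto simp: large_conjugates_def small_conjugates_def)
  moreover have "finite (large_conjugates \<alpha>)" "finite (small_conjugates \<alpha>)"
    using finite_conjugates[OF \<alpha>] by (auto simp: large_conjugates_def small_conjugates_def)
  ultimately have "card (conjugates \<alpha>) = card (large_conjugates \<alpha>) + card (small_conjugates \<alpha>)"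
    by (simp add: card_Un_disjoint)
  then show ?thesis
    using card_conjugates[OF \<alpha>] by simp
qed

end

lemma hom_on_gal_Qbar:
  assumes "gal_Qbar \<sigma>"
  shows "hom_on {x. algebraic x} \<sigma>"
proof -
  have bij: "bij_betw \<sigma> {x. algebraic x} {x. algebraic x}"
    and hom: "\<And>x y. algebraic x \<Longrightarrow> algebraic y \<Longrightarrow> \<sigma> (x + y) = \<sigma> x + \<sigma> y \<and> \<sigma> (x * y) = \<sigma> x * \<sigma> y"
    using assms by (auto simp: gal_Qbar_def)
  have "1 \<in> \<sigma> ` {x. algebraic x}"
    using bij by (simp add: bij_betw_def)
  then obtain x where x: "algebraic x" "\<sigma> x = 1"
    by auto
  have "\<sigma> 1 = 1"
    using hom[OF algebraic_1 x(1)] x(2) by simp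
  then show ?thesis
    using hom unfolding hom_on_def by auto
qed

lemma degree_over_normal_closure_dvd_card:
  assumes \<alpha>: "algebraic \<alpha>" and \<beta>: "algebraic \<beta>" and S: "S \<subseteq> conjugates \<alpha>"
    and stable: "\<And>L \<tau>. is_subfield L \<Longrightarrow> hom_on L \<tau> \<Longrightarrow> conjugates \<alpha> \<subseteq> L \<Longrightarrow> \<tau> \<beta> = \<beta> \<Longrightarrow> \<tau> ` S = S"
  shows "degree_over (normal_closure \<beta>) \<alpha> dvd card S"
proof -
  let ?N = "normal_closure \<beta>"
  have N: "is_subfield ?N"
    unfolding normal_closure_def by (rule is_subfield_gen_field)
  have \<beta>_N: "\<beta> \<in> ?N"
    using self_in_conjugates[OF \<beta>] gen_field_superset unfolding normal_closure_def by blast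
  have "poly_over ?N (\<Prod>z\<in>S. [:-z, 1:])"
  proof (rule poly_over_prod_linear_if_stable[OF N finite_conjugates[OF \<alpha>] algebraic_conjugate[OF \<alpha>] S])
    fix L \<tau>
    assume "is_subfield L" "hom_on L \<tau>" "?N \<union> conjugates \<alpha> \<subseteq> L" "\<And>x. x \<in> ?N \<Longrightarrow> \<tau> x = x"
    then show "\<tau> ` S = S"
      using \<beta>_N by (intro stable) auto
  qed
  moreover have "alg_over ?N z \<and> degree_over ?N z = degree_over ?N \<alpha>"
    if "poly (\<Prod>z\<in>S. [:-z, 1:]) z = 0" for z
  proof -
    have "z \<in> conjugates \<alpha>"
      using that S poly_prod_linear_eq_0_iff[OF finite_subset[OF S finite_conjugates[OF \<alpha>]]] by auto
    then show ?thesis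
      using algebraic_alg_over[OF algebraic_conjugate[OF \<alpha>] N]
        degree_over_normal_closure_conjugate[OF \<beta> \<alpha>] by blast
  qed
  ultimately have "degree_over ?N \<alpha> dvd degree (\<Prod>z\<in>S. [:-z, 1:])"
    by (rule degree_over_dvd_degree[OF N _ lead_coeff_prod_linear])
  then show ?thesis
    by (simp add: degree_prod_linear)
qed

theorem degree_over_normal_closure_dvd_gcd:
  assumes \<alpha>: "algebraic \<alpha>"
  defines "N \<equiv> normal_closure (complex_of_real (weil_height \<alpha> ^ alg_degree \<alpha>))"
  shows "degree_over N \<alpha> dvd gcd (card (small_conjugates \<alpha>)) (alg_degree \<alpha>)"
proof -
  let ?\<gamma> = "complex_of_real (weil_height \<alpha> ^ alg_degree \<alpha>)"
  have "degree_over N \<alpha> dvd card (large_conjugates \<alpha>)"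
    unfolding N_def
  proof (rule degree_over_normal_closure_dvd_card[OF \<alpha> algebraic_weil_height_power[OF \<alpha>]])
    fix L \<tau>
    assume "is_subfield L" "hom_on L \<tau>" "conjugates \<alpha> \<subseteq> L" "\<tau> ?\<gamma> = ?\<gamma>"
    then show "\<tau> ` large_conjugates \<alpha> = large_conjugates \<alpha>"
      by (rule hom_on_large_conjugates[OF \<alpha>])
  qed (auto simp: large_conjugates_def)
  moreover have "degree_over N \<alpha> dvd card (small_conjugates \<alpha>)"
    unfolding N_def
  proof (rule degree_over_normal_closure_dvd_card[OF \<alpha> algebraic_weil_height_power[OF \<alpha>]])
    fix L \<tau>
    assume "is_subfield L" "hom_on L \<tau>" "conjugates \<alpha> \<subseteq> L" "\<tau> ?\<gamma> = ?\<gamma>"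
    then show "\<tau> ` small_conjugates \<alpha> = small_conjugates \<alpha>"
      by (rule hom_on_small_conjugates[OF \<alpha>])
  qed (auto simp: small_conjugates_def)
  ultimately show ?thesis
    using card_large_small_conjugates[OF \<alpha>] by (metis dvd_add gcd_greatest)
qed

theorem gal_Qbar_large_conjugates:
  assumes \<alpha>: "algebraic \<alpha>" and \<sigma>: "gal_Qbar \<sigma>"
    and fixed: "\<sigma> (complex_of_real (weil_height \<alpha> ^ alg_degree \<alpha>)) =
      complex_of_real (weil_height \<alpha> ^ alg_degree \<alpha>)"
  shows "\<sigma> ` large_conjugates \<alpha> = large_conjugates \<alpha>"
  using hom_on_large_conjugates[OF \<alpha> is_subfield_algebraic hom_on_gal_Qbar[OF \<sigma>] _ fixed]
    algebraic_conjugate[OF \<alpha>] by blast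

theorem lemma5p1:
  fixes k d :: nat and H :: real and \<alpha> :: complex
  assumes "0 < k" "k < d"
    and "algebraic (complex_of_real H)" "H \<ge> 1"
    and "\<alpha> \<in> A_set k d H"
  shows "degree_over (normal_closure (complex_of_real (H ^ d))) \<alpha> dvd gcd k d
    \<and> (\<forall>\<sigma>. gal_Qbar \<sigma> \<and> \<sigma> (complex_of_real (H ^ d)) = complex_of_real (H ^ d) \<longrightarrow>
         \<sigma> ` {z \<in> conjugates \<alpha>. cmod z \<ge> 1} = {z \<in> conjugates \<alpha>. cmod z \<ge> 1})"
proof -
  have \<alpha>: "algebraic \<alpha>" and "alg_degree \<alpha> = d" "weil_height \<alpha> = H"
    and "card (small_conjugates \<alpha>) = k"
    using assms(5) by (auto simp: A_set_def small_conjugates_def)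
  then show ?thesis
    using degree_over_normal_closure_dvd_gcd[OF \<alpha>] gal_Qbar_large_conjugates[OF \<alpha>]
    by (simp add: gcd.commute large_conjugates_def)
qed

end
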